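(* Let $(E,\|\cdot\|)$ be a real Banach space and $\mathcal{C}\subset E$ a closed convex cone with $\mathbb{R}_+\mathcal{C}=\mathcal{C}$, $\mathcal{C}\cap(-\mathcal{C})=\{0\}$. Assume (H1): there are $\ell\in E'$, $\|\ell\|=1$, and $K\in[1,\infty)$ with $\langle\ell,\phi\rangle\ge\frac1K\|\phi\|$ for $\phi\in\mathcal{C}$; (H2): $\rho\in(0,1]$ is fixed with $\mathcal{C}(\rho)=\{\phi\in\mathcal{C}:B(\phi,\rho\|\phi\|)\subset\mathcal{C}\}\ne\{0\}$. Let $\mathcal{C}_{\ell=1}(\rho)=\{\phi\in\mathcal{C}(\rho):\langle\ell,\phi\rangle=1\}$, let $\Delta=\sup\{d_{\mathcal{C}}(x,y):x,y\in\mathcal{C}(\rho)\setminus\{0\}\}$ and $\eta=\tanh(\Delta/4)$. Let $\mathcal{M}\subset L(E)$ satisfy, for some $1\le\vartheta<\infty$ and all $L\in\mathcal{M}$: (H3) $L(\mathcal{C}\setminus\{0\})\subset\mathcal{C}(\rho)\setminus\{0\}$; (H4) $\frac1\vartheta\le\|L\|\le\vartheta$. Let $(\Omega,\mathcal{F},\mathbb{P})$ be a probability space with invertible, measure-preserving, ergodic $\tau$; $X=L^\infty(\Omega,E)$ (uniformly bounded Bochner measurable sections, sup norm); $(\mathcal{L}_\omega)_\omega$ with values in $\mathcal{M}$ such that $\mathbf{L}:X\to X$, $(\mathbf{L}\boldsymbol{z})_\omega=\mathcal{L}_{\tau^{-1}\omega}z_{\tau^{-1}\omega}$, preserves Bochner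 measurability. For $\boldsymbol{z}\in X$ let $\Lambda(\boldsymbol z)_\omega=\langle\ell,\mathcal{L}_{\tau^{-1}\omega}z_{\tau^{-1}\omega}\rangle$, and whenever $\Lambda(\boldsymbol\phi)$ is bounded away from $0$ let $\boldsymbol\pi(\boldsymbol\phi)=\Lambda(\boldsymbol\phi)^{-1}\mathbf{L}\boldsymbol\phi$ (fiberwise multiplication). For $\boldsymbol\phi\in X$ with values in $\mathcal{C}_{\ell=1}(\rho)$ define $\mathbf{Q}(\boldsymbol\phi)\in L(X)$ by \[\mathbf{Q}(\boldsymbol\phi)\boldsymbol z=\Lambda(\boldsymbol\phi)^{-1}\big(\mathbf{L}\boldsymbol z-\Lambda(\boldsymbol z)\boldsymbol\pi(\boldsymbol\phi)\big).\] Then there is $C=C(\rho,K,\vartheta)>0$ such that for every $\boldsymbol\phi\in X$ with values in $\mathcal{C}_{\ell=1}(\rho)$ and every $\boldsymbol z\in X$ with $\|\boldsymbol z\|<\frac{\rho}{2\vartheta^2K}$, \[\|\boldsymbol\pi(\boldsymbol\phi+\boldsymbol z)-\boldsymbol\pi(\boldsymbol\phi)-\mathbf{Q}(\boldsymbol\phi)\boldsymbol z\|\le C\|\boldsymbol z\|^2,\] so $\mathbf{Q}(\boldsymbol\phi)$ is the derivative of $\boldsymbol\pi$ at $\boldsymbol\phi$. Moreover, if $\mathbf{f}\in X$ is the fixed point of $\boldsymbol\pi$ with values in $\mathcal{C}_{\ell=1}(\rho)$, then $\mathbf{1}-\mathbf{Q}(\mathbf{f})$ is invertible in $L(X)$ with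 $\|(\mathbf{1}-\mathbf{Q}(\mathbf{f}))^{-1}\|\le1+\frac{K/\rho}{1-\eta}$.
   Context: Hilbert projective metric: for $x,y\in\mathcal{C}\setminus\{0\}$, $\delta(x,y)=\inf\{t>0:tx-y\in\mathcal{C}\}$ and $d_{\mathcal{C}}(x,y)=\log(\delta(x,y)\delta(y,x))\in[0,+\infty]$. Bochner measurable means uniform limit of measurable countably-valued maps. *)

theory Defs
  imports "HOL-Probability.Probability"
begin

definition rho_interior :: "'e::real_normed_vector set \<Rightarrow> real \<Rightarrow> 'e set" where
  "rho_interior C \<rho> = {\<phi> \<in> C. ball \<phi> (\<rho> * norm \<phi>) \<subseteq> C}"

definition normalized_part :: "'e::real_normed_vector set \<Rightarrow> real \<Rightarrow> ('e \<Rightarrow> real) \<Rightarrow> 'e set" where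
  "normalized_part C \<rho> lf = {\<phi> \<in> rho_interior C \<rho>. lf \<phi> = 1}"

text \<open>delta(x,y) = inf {t>0. t x - y in C}, valued in [0,+infinity] (inf of the empty set = +infinity).\<close>
definition hdelta :: "'e::real_normed_vector set \<Rightarrow> 'e \<Rightarrow> 'e \<Rightarrow> ereal" where
  "hdelta C x y = Inf {ereal t | t. t > 0 \<and> t *\<^sub>R x - y \<in> C}"

definition hilbert_dist :: "'e::real_normed_vector set \<Rightarrow> 'e \<Rightarrow> 'e \<Rightarrow> ereal" where
  "hilbert_dist C x y =
     (if hdelta C x y = \<infinity> \<or> hdelta C y x = \<infinity> then \<infinity>
      else ereal (ln (real_of_ereal (hdelta C x y) * real_of_ereal (hdelta C y x))))"

definition hilbert_diam :: "'e::real_normed_vector set \<Rightarrow> real \<Rightarrow> ereal" where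
  "hilbert_diam C \<rho> = (SUP p \<in> (rho_interior C \<rho> - {0}) \<times> (rho_interior C \<rho> - {0}).
                          hilbert_dist C (fst p) (snd p))"

definition eta_const :: "'e::real_normed_vector set \<Rightarrow> real \<Rightarrow> real" where
  "eta_const C \<rho> = (if hilbert_diam C \<rho> = \<infinity> then 1 else tanh (real_of_ereal (hilbert_diam C \<rho>) / 4))"

definition measure_preserving_map :: "'w measure \<Rightarrow> ('w \<Rightarrow> 'w) \<Rightarrow> bool" where
  "measure_preserving_map M T \<longleftrightarrow> T \<in> measurable M M \<and> distr M M T = M"

definition ergodic_map :: "'w measure \<Rightarrow> ('w \<Rightarrow> 'w) \<Rightarrow> bool" where
  "ergodic_map M T \<longleftrightarrow> (\<forall>A \<in> sets M. T -` A \<inter> space M = A \<longrightarrow> measure M A = 0 \<or> measure M A = 1)"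

definition bochner_meas :: "'w measure \<Rightarrow> ('w \<Rightarrow> 'e::real_normed_vector) \<Rightarrow> bool" where
  "bochner_meas M z \<longleftrightarrow>
     (\<exists>s :: nat \<Rightarrow> 'w \<Rightarrow> 'e.
        (\<forall>n. countable (s n ` space M) \<and> (\<forall>v. s n -` {v} \<inter> space M \<in> sets M)) \<and>
        (\<forall>\<epsilon>>0. \<exists>N. \<forall>n\<ge>N. \<forall>\<omega>\<in>space M. norm (s n \<omega> - z \<omega>) < \<epsilon>))"

text \<open>The space X = L-infinity(Omega,E): uniformly bounded Bochner measurable sections.
  Sections are taken extensional (zero outside space M), so that X is a space of functions.\<close>
definition Xsp :: "'w measure \<Rightarrow> ('w \<Rightarrow> 'e::real_normed_vector) set" where
  "Xsp M = {z. bochner_meas M z \<and> bounded (z ` space M) \<and> (\<forall>\<omega>. \<omega> \<notin> space M \<longrightarrow> z \<omega> = 0)}"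

definition supn :: "'w measure \<Rightarrow> ('w \<Rightarrow> 'e::real_normed_vector) \<Rightarrow> real" where
  "supn M z = (SUP \<omega> \<in> space M. norm (z \<omega>))"

definition Lop :: "'w measure \<Rightarrow> ('w \<Rightarrow> 'w) \<Rightarrow> ('w \<Rightarrow> 'e \<Rightarrow> 'e::real_normed_vector) \<Rightarrow> ('w \<Rightarrow> 'e) \<Rightarrow> 'w \<Rightarrow> 'e" where
  "Lop M \<tau>i \<L> z = (\<lambda>\<omega>. if \<omega> \<in> space M then \<L> (\<tau>i \<omega>) (z (\<tau>i \<omega>)) else 0)"

definition Lam :: "'w measure \<Rightarrow> ('e \<Rightarrow> real) \<Rightarrow> ('w \<Rightarrow> 'w) \<Rightarrow> ('w \<Rightarrow> 'e \<Rightarrow> 'e::real_normed_vector) \<Rightarrow> ('w \<Rightarrow> 'e) \<Rightarrow> 'w \<Rightarrow> real" where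
  "Lam M lf \<tau>i \<L> z = (\<lambda>\<omega>. lf (Lop M \<tau>i \<L> z \<omega>))"

definition piop :: "'w measure \<Rightarrow> ('e \<Rightarrow> real) \<Rightarrow> ('w \<Rightarrow> 'w) \<Rightarrow> ('w \<Rightarrow> 'e \<Rightarrow> 'e::real_normed_vector) \<Rightarrow> ('w \<Rightarrow> 'e) \<Rightarrow> 'w \<Rightarrow> 'e" where
  "piop M lf \<tau>i \<L> \<phi> = (\<lambda>\<omega>. (1 / Lam M lf \<tau>i \<L> \<phi> \<omega>) *\<^sub>R Lop M \<tau>i \<L> \<phi> \<omega>)"

definition Qop :: "'w measure \<Rightarrow> ('e \<Rightarrow> real) \<Rightarrow> ('w \<Rightarrow> 'w) \<Rightarrow> ('w \<Rightarrow> 'e \<Rightarrow> 'e::real_normed_vector) \<Rightarrow> ('w \<Rightarrow> 'e) \<Rightarrow> ('w \<Rightarrow> 'e) \<Rightarrow> 'w \<Rightarrow> 'e" where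
  "Qop M lf \<tau>i \<L> \<phi> z = (\<lambda>\<omega>. (1 / Lam M lf \<tau>i \<L> \<phi> \<omega>) *\<^sub>R
       (Lop M \<tau>i \<L> z \<omega> - Lam M lf \<tau>i \<L> z \<omega> *\<^sub>R piop M lf \<tau>i \<L> \<phi> \<omega>))"

definition cone_setting :: "'e::banach set \<Rightarrow> ('e \<Rightarrow> real) \<Rightarrow> real \<Rightarrow> real \<Rightarrow> bool" where
  "cone_setting C lf K \<rho> \<longleftrightarrow>
     closed C \<and> convex C \<and> cone C \<and> C \<inter> uminus ` C = {0} \<and>
     \<comment> \<open>(H1)\<close>
     bounded_linear lf \<and> onorm lf = 1 \<and> 1 \<le> K \<and> (\<forall>\<phi>\<in>C. lf \<phi> \<ge> norm \<phi> / K) \<and>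
     \<comment> \<open>(H2)\<close>
     0 < \<rho> \<and> \<rho> \<le> 1 \<and> rho_interior C \<rho> \<noteq> {0}"

definition operator_class :: "'e::banach set \<Rightarrow> real \<Rightarrow> real \<Rightarrow> ('e \<Rightarrow> 'e) set" where
  "operator_class C \<rho> \<theta> =
     {L. bounded_linear L \<and>
         L ` (C - {0}) \<subseteq> rho_interior C \<rho> - {0} \<and>   \<comment> \<open>(H3)\<close>
         1 / \<theta> \<le> onorm L \<and> onorm L \<le> \<theta>}"

definition full_setting ::
  "'e::banach set \<Rightarrow> ('e \<Rightarrow> real) \<Rightarrow> real \<Rightarrow> real \<Rightarrow> real \<Rightarrow> ('e \<Rightarrow> 'e) set \<Rightarrow>
   'w measure \<Rightarrow> ('w \<Rightarrow> 'w) \<Rightarrow> ('w \<Rightarrow> 'w) \<Rightarrow> ('w \<Rightarrow> 'e \<Rightarrow> 'e) \<Rightarrow> bool" where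
  "full_setting C lf K \<rho> \<theta> \<M> M \<tau> \<tau>i \<L> \<longleftrightarrow>
     cone_setting C lf K \<rho> \<and> 1 \<le> \<theta> \<and> \<M> \<subseteq> operator_class C \<rho> \<theta> \<and>
     prob_space M \<and>
     \<comment> \<open>tau invertible with inverse tau_i, measure preserving, ergodic\<close>
     (\<forall>\<omega>\<in>space M. \<tau> \<omega> \<in> space M \<and> \<tau>i \<omega> \<in> space M \<and> \<tau>i (\<tau> \<omega>) = \<omega> \<and> \<tau> (\<tau>i \<omega>) = \<omega>) \<and>
     measure_preserving_map M \<tau> \<and> measure_preserving_map M \<tau>i \<and> ergodic_map M \<tau> \<and>
     (\<forall>\<omega>\<in>space M. \<L> \<omega> \<in> \<M>) \<and>
     (\<forall>z\<in>Xsp M. bochner_meas M (Lop M \<tau>i \<L> z))"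

end

(*
  Differentiability: fibrewise, pi(phi) = L phi / <l, L phi> is a normalisation, and the remainder
  pi(phi + z) - pi(phi) - Q(phi) z equals mu^2/(lam^2 (lam + mu)) L phi - mu/(lam (lam + mu)) L z,
  where lam = <l, L phi> >= rho/(K theta) and mu = <l, L z>; the smallness of z keeps
  |mu| <= lam/2, so this is O(|z|^2) uniformly in omega.

  Invertibility: if z lies fibrewise in an order interval [a f, b f] of the cone, Birkhoff's contraction (via the Hilbert-metric diameter Delta of C(rho))
  puts Q(f) z in one of length tanh(Delta/4) (b - a). Since <l, Q(f)^n z> = 0, the length of the
  interval controls the norm, so |Q(f)^n z| <= (K/rho) eta^n |z| and the Neumann series
  sum_n Q(f)^n converges in X to the inverse of 1 - Q(f); Bochner measurability passes to the
  uniform limit of its partial sums.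
*)
theory Submission
  imports Defs
begin

section \<open>Bochner measurability\<close>

definition countably_valued :: "'w measure \<Rightarrow> ('w \<Rightarrow> 'b) \<Rightarrow> bool" where
  "countably_valued M s \<longleftrightarrow> countable (s ` space M) \<and> (\<forall>v. s -` {v} \<inter> space M \<in> sets M)"

lemma bochner_meas_iff_approx:
  "bochner_meas M z \<longleftrightarrow>
    (\<forall>\<epsilon>>0. \<exists>s. countably_valued M s \<and> (\<forall>\<omega>\<in>space M. norm (s \<omega> - z \<omega>) < \<epsilon>))"
proof
  assume "bochner_meas M z"
  then have "\<exists>s :: nat \<Rightarrow> _. (\<forall>n. countably_valued M (s n)) \<and>
      (\<forall>\<epsilon>>0. \<exists>N. \<forall>n\<ge>N. \<forall>\<omega>\<in>space M. norm (s n \<omega> - z \<omega>) < \<epsilon>)"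
    by (simp only: bochner_meas_def countably_valued_def)
  then obtain s :: "nat \<Rightarrow> _" where s: "\<forall>n. countably_valued M (s n)"
    and lim: "\<forall>\<epsilon>>0. \<exists>N. \<forall>n\<ge>N. \<forall>\<omega>\<in>space M. norm (s n \<omega> - z \<omega>) < \<epsilon>"
    by blast
  show "\<forall>\<epsilon>>0. \<exists>s. countably_valued M s \<and> (\<forall>\<omega>\<in>space M. norm (s \<omega> - z \<omega>) < \<epsilon>)"
  proof (intro allI impI)
    fix \<epsilon> :: real assume "\<epsilon> > 0"
    then obtain N where "\<forall>n\<ge>N. \<forall>\<omega>\<in>space M. norm (s n \<omega> - z \<omega>) < \<epsilon>" using lim by blast
    then have "\<forall>\<omega>\<in>space M. norm (s N \<omega> - z \<omega>) < \<epsilon>" by simp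
    with s show "\<exists>s. countably_valued M s \<and> (\<forall>\<omega>\<in>space M. norm (s \<omega> - z \<omega>) < \<epsilon>)" by blast
  qed
next
  assume "\<forall>\<epsilon>>0. \<exists>s. countably_valued M s \<and> (\<forall>\<omega>\<in>space M. norm (s \<omega> - z \<omega>) < \<epsilon>)"
  then have "\<forall>n. \<exists>s. countably_valued M s \<and> (\<forall>\<omega>\<in>space M. norm (s \<omega> - z \<omega>) < inverse (real (Suc n)))"
    by simp
  then obtain s where s: "\<forall>n. countably_valued M (s n) \<and>
      (\<forall>\<omega>\<in>space M. norm (s n \<omega> - z \<omega>) < inverse (real (Suc n)))"
    by (rule choice[THEN exE]) blast
  have "\<exists>N. \<forall>n\<ge>N. \<forall>\<omega>\<in>space M. norm (s n \<omega> - z \<omega>) < \<epsilon>" if "\<epsilon> > 0" for \<epsilon> :: real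
  proof -
    obtain N where N: "inverse (real (Suc N)) < \<epsilon>" using reals_Archimedean \<open>\<epsilon> > 0\<close> by blast
    have "norm (s n \<omega> - z \<omega>) < \<epsilon>" if "N \<le> n" "\<omega> \<in> space M" for n \<omega>
    proof -
      have "inverse (real (Suc n)) \<le> inverse (real (Suc N))"
        using \<open>N \<le> n\<close> by (simp add: le_imp_inverse_le)
      moreover have "norm (s n \<omega> - z \<omega>) < inverse (real (Suc n))" using s \<open>\<omega> \<in> space M\<close> by blast
      ultimately show ?thesis using N by linarith
    qed
    then show ?thesis by blast
  qed
  with s show "bochner_meas M z"
    unfolding bochner_meas_def countably_valued_def by blast
qed

lemma bochner_meas_cong:
  "bochner_meas M g \<Longrightarrow> (\<And>\<omega>. \<omega> \<in> space M \<Longrightarrow> k \<omega> = g \<omega>) \<Longrightarrow> bochner_meas M k"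
  unfolding bochner_meas_iff_approx by simp

lemma bochner_meas_compose2:
  fixes g :: "'w \<Rightarrow> 'a::real_normed_vector" and h :: "'w \<Rightarrow> 'b::real_normed_vector"
    and F :: "'a \<Rightarrow> 'b \<Rightarrow> 'c::real_normed_vector"
  assumes "bochner_meas M g" "bochner_meas M h"
    and uc: "\<And>\<epsilon>. \<epsilon> > 0 \<Longrightarrow> \<exists>\<delta>>0. \<forall>\<omega>\<in>space M. \<forall>a b. norm (a - g \<omega>) < \<delta> \<longrightarrow> norm (b - h \<omega>) < \<delta>
              \<longrightarrow> norm (F a b - F (g \<omega>) (h \<omega>)) < \<epsilon>"
  shows "bochner_meas M (\<lambda>\<omega>. F (g \<omega>) (h \<omega>))"
  unfolding bochner_meas_iff_approx
proof (intro allI impI)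
  fix \<epsilon> :: real assume "\<epsilon> > 0"
  then obtain \<delta> where "\<delta> > 0" and \<delta>: "\<forall>\<omega>\<in>space M. \<forall>a b. norm (a - g \<omega>) < \<delta> \<longrightarrow>
      norm (b - h \<omega>) < \<delta> \<longrightarrow> norm (F a b - F (g \<omega>) (h \<omega>)) < \<epsilon>"
    using uc by blast
  obtain s where s: "countably_valued M s" "\<forall>\<omega>\<in>space M. norm (s \<omega> - g \<omega>) < \<delta>"
    using assms(1) \<open>\<delta> > 0\<close> unfolding bochner_meas_iff_approx by blast
  obtain t where t: "countably_valued M t" "\<forall>\<omega>\<in>space M. norm (t \<omega> - h \<omega>) < \<delta>"
    using assms(2) \<open>\<delta> > 0\<close> unfolding bochner_meas_iff_approx by blast
  define r where "r = (\<lambda>\<omega>. F (s \<omega>) (t \<omega>))"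
  let ?V = "s ` space M \<times> t ` space M"
  have V: "countable ?V"
    using s(1) t(1) unfolding countably_valued_def by (simp add: countable_SIGMA)
  have "countably_valued M r"
    unfolding countably_valued_def
  proof
    have "r ` space M \<subseteq> (\<lambda>p. F (fst p) (snd p)) ` ?V"
      unfolding r_def by force
    then show "countable (r ` space M)"
      by (rule countable_subset) (use V in simp)
    show "\<forall>v. r -` {v} \<inter> space M \<in> sets M"
    proof
      fix v
      let ?I = "{p \<in> ?V. F (fst p) (snd p) = v}"
      have eq: "r -` {v} \<inter> space M = (\<Union>p\<in>?I. (s -` {fst p} \<inter> space M) \<inter> (t -` {snd p} \<inter> space M))"
      proof (rule set_eqI)
        fix x show "x \<in> r -` {v} \<inter> space M \<longleftrightarrow>
          x \<in> (\<Union>p\<in>?I. (s -` {fst p} \<inter> space M) \<inter> (t -` {snd p} \<inter> space M))"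
          unfolding r_def by (auto intro!: bexI[of _ "(s x, t x)"])
      qed
      have "countable ?I"
        by (rule countable_subset[OF _ V]) blast
      then show "r -` {v} \<inter> space M \<in> sets M"
        unfolding eq by (rule sets.countable_UN'') (use s(1) t(1) in \<open>blast intro: sets.Int dest: countably_valued_def[THEN iffD1]\<close>)
    qed
  qed
  moreover have "norm (r \<omega> - F (g \<omega>) (h \<omega>)) < \<epsilon>" if "\<omega> \<in> space M" for \<omega>
    using \<delta>[rule_format, OF that, of "s \<omega>" "t \<omega>"] s(2) t(2) that unfolding r_def by simp
  ultimately show "\<exists>r. countably_valued M r \<and> (\<forall>\<omega>\<in>space M. norm (r \<omega> - F (g \<omega>) (h \<omega>)) < \<epsilon>)"
    by blast
qed

lemma bochner_meas_uniform_limit: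
  assumes "\<And>n. bochner_meas M (u n)"
    and "\<And>\<epsilon>. \<epsilon> > 0 \<Longrightarrow> \<exists>n. \<forall>\<omega>\<in>space M. norm (u n \<omega> - z \<omega>) < \<epsilon>"
  shows "bochner_meas M z"
  unfolding bochner_meas_iff_approx
proof (intro allI impI)
  fix \<epsilon> :: real assume "\<epsilon> > 0"
  then obtain n where n: "\<forall>\<omega>\<in>space M. norm (u n \<omega> - z \<omega>) < \<epsilon>/2"
    using assms(2) half_gt_zero by blast
  obtain s where s: "countably_valued M s" "\<forall>\<omega>\<in>space M. norm (s \<omega> - u n \<omega>) < \<epsilon>/2"
    using assms(1)[of n] \<open>\<epsilon> > 0\<close> unfolding bochner_meas_iff_approx by (meson half_gt_zero)
  have "norm (s \<omega> - z \<omega>) < \<epsilon>" if "\<omega> \<in> space M" for \<omega>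
    using norm_diff_triangle_less[of "s \<omega>" "u n \<omega>" "\<epsilon>/2" "z \<omega>" "\<epsilon>/2"] n s(2) that by simp
  then show "\<exists>s. countably_valued M s \<and> (\<forall>\<omega>\<in>space M. norm (s \<omega> - z \<omega>) < \<epsilon>)"
    using s(1) by blast
qed

lemma bochner_meas_const: "bochner_meas M (\<lambda>\<omega>. c)"
proof -
  have "countably_valued M (\<lambda>\<omega>. c)"
    unfolding countably_valued_def
    by (auto intro: countable_subset[of _ "{c}"] simp: vimage_def)
  then show ?thesis unfolding bochner_meas_iff_approx by auto
qed

lemma bochner_meas_add:
  fixes g h :: "'w \<Rightarrow> 'a::real_normed_vector"
  assumes "bochner_meas M g" "bochner_meas M h"
  shows "bochner_meas M (\<lambda>\<omega>. g \<omega> + h \<omega>)"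
proof (rule bochner_meas_compose2[OF assms, where F = "(+)"])
  fix \<epsilon> :: real assume "\<epsilon> > 0"
  have "norm (a + b - (g \<omega> + h \<omega>)) < \<epsilon>" if "norm (a - g \<omega>) < \<epsilon>/2" "norm (b - h \<omega>) < \<epsilon>/2"
    for a b \<omega>
    using norm_triangle_lt[of "a - g \<omega>" "b - h \<omega>" \<epsilon>] that by (simp add: algebra_simps)
  then show "\<exists>\<delta>>0. \<forall>\<omega>\<in>space M. \<forall>a b. norm (a - g \<omega>) < \<delta> \<longrightarrow> norm (b - h \<omega>) < \<delta>
      \<longrightarrow> norm (a + b - (g \<omega> + h \<omega>)) < \<epsilon>"
    using \<open>\<epsilon> > 0\<close> half_gt_zero by blast
qed

lemma bochner_meas_sum:
  fixes u :: "nat \<Rightarrow> 'w \<Rightarrow> 'a::real_normed_vector"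
  assumes "\<And>n. bochner_meas M (u n)"
  shows "bochner_meas M (\<lambda>\<omega>. \<Sum>n<N. u n \<omega>)"
  by (induction N) (simp_all add: bochner_meas_const bochner_meas_add assms)

lemma bochner_meas_bounded_linear:
  assumes "bochner_meas M g" "bounded_linear F"
  shows "bochner_meas M (\<lambda>\<omega>. F (g \<omega>))"
proof (rule bochner_meas_compose2[OF assms(1,1), where F = "\<lambda>a b. F a"])
  fix \<epsilon> :: real assume "\<epsilon> > 0"
  interpret F: bounded_linear F by fact
  obtain B where "B > 0" and B: "\<And>x. norm (F x) \<le> norm x * B" using F.pos_bounded by blast
  have "norm (F a - F (g \<omega>)) < \<epsilon>" if "norm (a - g \<omega>) < \<epsilon> / B" for a \<omega>
    using B[of "a - g \<omega>"] that \<open>B > 0\<close> by (simp add: F.diff pos_less_divide_eq)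
  then show "\<exists>\<delta>>0. \<forall>\<omega>\<in>space M. \<forall>a b. norm (a - g \<omega>) < \<delta> \<longrightarrow> norm (b - g \<omega>) < \<delta>
      \<longrightarrow> norm (F a - F (g \<omega>)) < \<epsilon>"
    using \<open>\<epsilon> > 0\<close> \<open>B > 0\<close> by (intro exI[of _ "\<epsilon> / B"]) auto
qed

lemma bochner_meas_diff:
  fixes g h :: "'w \<Rightarrow> 'a::real_normed_vector"
  assumes "bochner_meas M g" "bochner_meas M h"
  shows "bochner_meas M (\<lambda>\<omega>. g \<omega> - h \<omega>)"
  using bochner_meas_add[OF assms(1) bochner_meas_bounded_linear[OF assms(2) bounded_linear_minus[OF bounded_linear_ident]]]
  by simp

text \<open>Multiplication is only locally uniformly continuous, hence the boundedness hypotheses.\<close>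
lemma bochner_meas_scaleR:
  fixes g :: "'w \<Rightarrow> real" and h :: "'w \<Rightarrow> 'a::real_normed_vector"
  assumes "bochner_meas M g" "bochner_meas M h"
    and g_bound: "\<And>\<omega>. \<omega> \<in> space M \<Longrightarrow> \<bar>g \<omega>\<bar> \<le> Bg"
    and h_bound: "\<And>\<omega>. \<omega> \<in> space M \<Longrightarrow> norm (h \<omega>) \<le> Bh"
  shows "bochner_meas M (\<lambda>\<omega>. g \<omega> *\<^sub>R h \<omega>)"
proof (rule bochner_meas_compose2[OF assms(1,2), where F = "\<lambda>a b. a *\<^sub>R b"])
  fix \<epsilon> :: real assume "\<epsilon> > 0"
  define D where "D = \<bar>Bg\<bar> + \<bar>Bh\<bar> + 1"
  have "D > 0" unfolding D_def by simp
  define \<delta> where "\<delta> = min 1 (\<epsilon> / (2 * D))"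
  have \<delta>: "\<delta> > 0" "\<delta> \<le> 1" "\<delta> * D \<le> \<epsilon> / 2"
    using \<open>\<epsilon> > 0\<close> \<open>D > 0\<close> unfolding \<delta>_def by (auto simp: min_def pos_le_divide_eq mult.commute)
  have "norm (a *\<^sub>R b - g \<omega> *\<^sub>R h \<omega>) < \<epsilon>"
    if \<omega>: "\<omega> \<in> space M" and ab: "norm (a - g \<omega>) < \<delta>" "norm (b - h \<omega>) < \<delta>" for \<omega> a b
  proof -
    have "a *\<^sub>R b - g \<omega> *\<^sub>R h \<omega> = (a - g \<omega>) *\<^sub>R b + g \<omega> *\<^sub>R (b - h \<omega>)"
      by (simp add: algebra_simps)
    then have "norm (a *\<^sub>R b - g \<omega> *\<^sub>R h \<omega>) \<le> \<bar>a - g \<omega>\<bar> * norm b + \<bar>g \<omega>\<bar> * norm (b - h \<omega>)"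
      by (metis norm_scaleR norm_triangle_ineq)
    also have "\<dots> \<le> \<delta> * (\<bar>Bh\<bar> + 1) + \<bar>Bg\<bar> * \<delta>"
    proof (intro add_mono mult_mono)
      show "norm b \<le> \<bar>Bh\<bar> + 1"
        using ab(2) \<delta>(2) h_bound[OF \<omega>] norm_triangle_ineq[of "b - h \<omega>" "h \<omega>"] by auto
      show "\<bar>g \<omega>\<bar> \<le> \<bar>Bg\<bar>" using g_bound[OF \<omega>] by auto
    qed (use ab in auto)
    also have "\<dots> = \<delta> * D" unfolding D_def by (simp add: algebra_simps)
    finally show ?thesis using \<delta>(3) \<open>\<epsilon> > 0\<close> by linarith
  qed
  then show "\<exists>\<delta>>0. \<forall>\<omega>\<in>space M. \<forall>a b. norm (a - g \<omega>) < \<delta> \<longrightarrow> norm (b - h \<omega>) < \<delta>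
      \<longrightarrow> norm (a *\<^sub>R b - g \<omega> *\<^sub>R h \<omega>) < \<epsilon>"
    using \<delta>(1) by blast
qed

text \<open>On values above \<open>c\<close> the map \<open>x \<mapsto> 1 / max x c\<close> is \<open>1/c\<^sup>2\<close>-Lipschitz and agrees with
  \<open>x \<mapsto> 1 / x\<close>.\<close>
lemma bochner_meas_inverse:
  fixes g :: "'w \<Rightarrow> real"
  assumes "bochner_meas M g" "c > 0" and g_ge: "\<And>\<omega>. \<omega> \<in> space M \<Longrightarrow> c \<le> g \<omega>"
  shows "bochner_meas M (\<lambda>\<omega>. 1 / g \<omega>)"
proof (rule bochner_meas_cong)
  show "bochner_meas M (\<lambda>\<omega>. 1 / max (g \<omega>) c)"
  proof (rule bochner_meas_compose2[OF assms(1,1), where F = "\<lambda>a b. 1 / max a c"])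
    fix \<epsilon> :: real assume "\<epsilon> > 0"
    have "\<bar>1 / max a c - 1 / max (g \<omega>) c\<bar> < \<epsilon>"
      if \<omega>: "\<omega> \<in> space M" and a: "\<bar>a - g \<omega>\<bar> < \<epsilon> * c * c" for \<omega> a
    proof -
      define m where "m = max a c"
      have gc: "c \<le> g \<omega>" using g_ge[OF \<omega>] .
      have m: "c \<le> m" "\<bar>m - g \<omega>\<bar> \<le> \<bar>a - g \<omega>\<bar>" unfolding m_def using gc by auto
      have "\<bar>1 / m - 1 / g \<omega>\<bar> = \<bar>m - g \<omega>\<bar> / (m * g \<omega>)"
        using m gc \<open>c > 0\<close> by (simp add: field_simps abs_minus_commute)
      also have "\<dots> \<le> \<bar>m - g \<omega>\<bar> / (c * c)"
        using m gc \<open>c > 0\<close> by (intro divide_left_mono mult_mono) auto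
      also have "\<dots> < \<epsilon>"
        using m(2) a \<open>c > 0\<close> by (simp add: pos_divide_less_eq)
      finally show ?thesis using gc unfolding m_def by (simp add: max_def)
    qed
    then show "\<exists>\<delta>>0. \<forall>\<omega>\<in>space M. \<forall>a b. norm (a - g \<omega>) < \<delta> \<longrightarrow> norm (b - g \<omega>) < \<delta>
        \<longrightarrow> norm (1 / max a c - 1 / max (g \<omega>) c) < \<epsilon>"
      using \<open>\<epsilon> > 0\<close> \<open>c > 0\<close> by (intro exI[of _ "\<epsilon> * c * c"]) auto
  qed
qed (use g_ge in \<open>simp add: max_absorb1\<close>)

section \<open>Closed pointed convex cones and the Hilbert metric\<close>

lemma tanh_quarter_ln_product_ge:
  fixes \<beta> \<gamma> :: real
  assumes "0 < \<beta>" "0 < \<gamma>" "1 \<le> \<beta> * \<gamma>"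
  shows "(\<beta> * \<gamma> - 1) / ((1 + \<beta>) * (1 + \<gamma>)) \<le> tanh (ln (\<beta> * \<gamma>) / 4)"
proof -
  define y where "y = sqrt (\<beta> * \<gamma>)"
  have "y > 0" "y * y = \<beta> * \<gamma>" unfolding y_def using assms by simp_all
  have "ln (\<beta> * \<gamma>) / 4 = ln (sqrt y)"
    using assms unfolding y_def by (simp add: ln_sqrt)
  then have tanh_eq: "tanh (ln (\<beta> * \<gamma>) / 4) = (y - 1) / (y + 1)"
    using tanh_ln_real[of "sqrt y"] \<open>y > 0\<close> by simp
  have "0 \<le> (sqrt \<beta> - sqrt \<gamma>)\<^sup>2" by simp
  then have "2 * y \<le> \<beta> + \<gamma>"
    using assms(1,2) unfolding y_def by (simp add: power2_eq_square algebra_simps real_sqrt_mult)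
  \<comment> \<open>AM-GM: \<open>(1 + \<beta>)(1 + \<gamma>) \<ge> (1 + \<surd>(\<beta>\<gamma>))\<^sup>2\<close>\<close>
  then have "(1 + y) * (1 + y) \<le> (1 + \<beta>) * (1 + \<gamma>)"
    using \<open>y * y = \<beta> * \<gamma>\<close> by (simp add: algebra_simps)
  then have "(\<beta> * \<gamma> - 1) / ((1 + \<beta>) * (1 + \<gamma>)) \<le> (\<beta> * \<gamma> - 1) / ((1 + y) * (1 + y))"
    using \<open>y > 0\<close> assms by (intro divide_left_mono) auto
  also have "\<dots> = ((y - 1) * (y + 1)) / ((y + 1) * (y + 1))"
    unfolding \<open>y * y = \<beta> * \<gamma>\<close>[symmetric] by (simp add: algebra_simps)
  also have "\<dots> = (y - 1) / (y + 1)"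
    using \<open>y > 0\<close> by simp
  finally show ?thesis using tanh_eq by simp
qed

locale proper_cone =
  fixes C :: "'e::real_normed_vector set"
  assumes closed: "closed C" and convex: "convex C" and cone: "cone C"
    and pointed: "C \<inter> uminus ` C = {0}"
begin

lemma zero_mem: "0 \<in> C"
  using pointed by auto

lemma eq_0_if_neg_mem: "x \<in> C \<Longrightarrow> - x \<in> C \<Longrightarrow> x = 0"
  using pointed by (metis IntI equals0D insertE minus_minus rev_image_eqI)

lemma scaleR_mem: "x \<in> C \<Longrightarrow> 0 \<le> c \<Longrightarrow> c *\<^sub>R x \<in> C"
  using cone unfolding cone_def by blast

lemma add_mem:
  assumes "x \<in> C" "y \<in> C"
  shows "x + y \<in> C"
proof -
  have "(1/2) *\<^sub>R x + (1/2) *\<^sub>R y \<in> C"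
    using assms by (intro convexD[OF convex]) auto
  then have "2 *\<^sub>R ((1/2) *\<^sub>R x + (1/2) *\<^sub>R y) \<in> C" by (rule scaleR_mem) simp
  then show ?thesis by (simp add: scaleR_add_right)
qed

lemma rho_interior_subset: "rho_interior C \<rho> \<subseteq> C"
  unfolding rho_interior_def by blast

lemma zero_mem_rho_interior: "0 \<in> rho_interior C \<rho>"
  unfolding rho_interior_def using zero_mem by simp

lemma rho_interior_add_mem:
  assumes \<phi>: "\<phi> \<in> rho_interior C \<rho>" and e: "norm e \<le> \<rho> * norm \<phi>"
  shows "\<phi> + e \<in> C"
proof (cases "\<rho> * norm \<phi> > 0")
  case True
  have "ball \<phi> (\<rho> * norm \<phi>) \<subseteq> C" using \<phi> unfolding rho_interior_def by blast
  then have "cball \<phi> (\<rho> * norm \<phi>) \<subseteq> C"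
    using closure_minimal[OF _ closed] closure_ball[OF True] by metis
  then show ?thesis using e by (auto simp: dist_norm)
next
  case False
  then have "norm e \<le> 0" using e by linarith
  then have "e = 0" by simp
  then show ?thesis using \<phi> rho_interior_subset by auto
qed

lemma rho_interior_add_scaled_mem:
  assumes "p \<in> rho_interior C \<rho>" "0 \<le> c" "norm x \<le> c * (\<rho> * norm p)"
  shows "c *\<^sub>R p + x \<in> C"
proof (cases "c = 0")
  case True
  then show ?thesis using assms(3) zero_mem by simp
next
  case False
  then have "c > 0" using assms(2) by simp
  have "norm ((1 / c) *\<^sub>R x) \<le> \<rho> * norm p"
    using assms(3) \<open>c > 0\<close> by (simp add: field_simps)
  then have "p + (1 / c) *\<^sub>R x \<in> C" by (rule rho_interior_add_mem[OF assms(1)])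
  then have "c *\<^sub>R (p + (1 / c) *\<^sub>R x) \<in> C" using \<open>c > 0\<close> by (simp add: scaleR_mem)
  then show ?thesis using \<open>c > 0\<close> by (simp add: scaleR_add_right)
qed

lemma sandwich_le:
  assumes "v \<in> C" "v \<noteq> 0" "w - a *\<^sub>R v \<in> C" "b *\<^sub>R v - w \<in> C"
  shows "a \<le> b"
proof (rule ccontr)
  assume "\<not> a \<le> b"
  have "(w - a *\<^sub>R v) + (b *\<^sub>R v - w) \<in> C" using assms by (intro add_mem)
  then have "(b - a) *\<^sub>R v \<in> C" by (simp add: algebra_simps)
  then have "(1 / (a - b)) *\<^sub>R ((b - a) *\<^sub>R v) \<in> C"
    by (rule scaleR_mem) (use \<open>\<not> a \<le> b\<close> in simp)
  moreover have "(1 / (a - b)) * (b - a) = -1" using \<open>\<not> a \<le> b\<close> by (simp add: field_simps)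
  ultimately have "- v \<in> C" by simp
  then show False using eq_0_if_neg_mem assms(1,2) by blast
qed

lemma mutual_domination_product_ge_1:
  assumes "\<beta> *\<^sub>R p - q \<in> C" "\<gamma> *\<^sub>R q - p \<in> C" "0 \<le> \<beta>" "q \<in> C" "q \<noteq> 0"
  shows "1 \<le> \<beta> * \<gamma>"
proof (rule sandwich_le[OF assms(4,5)])
  show "q - 1 *\<^sub>R q \<in> C" using zero_mem by simp
  have "\<beta> *\<^sub>R (\<gamma> *\<^sub>R q - p) + (\<beta> *\<^sub>R p - q) \<in> C"
    using assms by (intro add_mem scaleR_mem) auto
  then show "(\<beta> * \<gamma>) *\<^sub>R q - q \<in> C" by (simp add: algebra_simps)
qed

text \<open>Every \<open>t > \<parallel>q\<parallel> / (\<rho> \<parallel>p\<parallel>)\<close> is admissible in the infimum defining \<open>hdelta C p q\<close>, because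
  \<open>p - q / t\<close> lies in the ball of radius \<open>\<rho> \<parallel>p\<parallel>\<close> around \<open>p\<close>; by closedness the infimum is
  attained, and it is positive because \<open>- q \<notin> C\<close>.\<close>
lemma hdelta_rho_interior:
  assumes "0 < \<rho>" and p: "p \<in> rho_interior C \<rho>" "p \<noteq> 0" and q: "q \<in> C" "q \<noteq> 0"
  shows "\<exists>\<beta>. hdelta C p q = ereal \<beta> \<and> 0 < \<beta> \<and> \<beta> *\<^sub>R p - q \<in> C \<and> \<beta> \<le> norm q / (\<rho> * norm p)"
proof -
  define S where "S = {t. t > 0 \<and> t *\<^sub>R p - q \<in> C}"
  define r0 where "r0 = norm q / (\<rho> * norm p)"
  have "\<rho> * norm p > 0" using \<open>0 < \<rho>\<close> p by simp
  have "r0 > 0" using \<open>\<rho> * norm p > 0\<close> q unfolding r0_def by simp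
  have above_r0: "t \<in> S" if "t > r0" for t
  proof -
    have "t > 0" using that \<open>r0 > 0\<close> by simp
    have "norm q / t < \<rho> * norm p"
      using that \<open>\<rho> * norm p > 0\<close> \<open>t > 0\<close> unfolding r0_def by (simp add: field_simps)
    then have "p + (- (1/t) *\<^sub>R q) \<in> C"
      using \<open>t > 0\<close> by (intro rho_interior_add_mem[OF p(1)]) simp
    then have "t *\<^sub>R (p + (- (1/t) *\<^sub>R q)) \<in> C" using \<open>t > 0\<close> by (intro scaleR_mem) auto
    then show ?thesis unfolding S_def using \<open>t > 0\<close> by (simp add: scaleR_diff_right)
  qed
  have "S \<noteq> {}" using above_r0[of "r0 + 1"] by auto
  have "bdd_below S" unfolding S_def by (rule bdd_belowI[of _ 0]) simp
  define \<beta> where "\<beta> = Inf S"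
  have "hdelta C p q = ereal \<beta>"
  proof -
    have "{ereal t | t. t > 0 \<and> t *\<^sub>R p - q \<in> C} = ereal ` S" unfolding S_def by auto
    then show ?thesis
      unfolding hdelta_def \<beta>_def using ereal_Inf'[OF \<open>bdd_below S\<close> \<open>S \<noteq> {}\<close>] by simp
  qed
  have "0 \<le> \<beta>" unfolding \<beta>_def using \<open>S \<noteq> {}\<close> by (intro cInf_greatest) (auto simp: S_def)
  have "\<beta> \<le> r0"
  proof (rule field_le_epsilon)
    fix e :: real assume "e > 0"
    then show "\<beta> \<le> r0 + e" unfolding \<beta>_def using above_r0 \<open>bdd_below S\<close> by (intro cInf_lower) auto
  qed
  have above_\<beta>: "(\<beta> + e) *\<^sub>R p - q \<in> C" if "e > 0" for e
  proof -
    have "Inf S < \<beta> + e" using \<open>e > 0\<close> unfolding \<beta>_def by simp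
    then obtain t where t: "t \<in> S" "t < \<beta> + e"
      using cInf_less_iff[OF \<open>S \<noteq> {}\<close> \<open>bdd_below S\<close>] by blast
    have "(t *\<^sub>R p - q) + (\<beta> + e - t) *\<^sub>R p \<in> C"
      using t p(1) rho_interior_subset unfolding S_def by (intro add_mem scaleR_mem) auto
    then show ?thesis by (simp add: algebra_simps)
  qed
  have "(\<lambda>n. (\<beta> + inverse (real (Suc n))) *\<^sub>R p - q) \<longlonglongrightarrow> \<beta> *\<^sub>R p - q"
    by (intro tendsto_intros LIMSEQ_inverse_real_of_nat_add)
  then have "\<beta> *\<^sub>R p - q \<in> C"
    by (rule closed_sequentially[OF closed, rotated]) (intro above_\<beta>, simp)
  moreover have "\<beta> \<noteq> 0" using \<open>\<beta> *\<^sub>R p - q \<in> C\<close> eq_0_if_neg_mem q by force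
  ultimately show ?thesis using \<open>hdelta C p q = ereal \<beta>\<close> \<open>0 \<le> \<beta>\<close> \<open>\<beta> \<le> r0\<close> unfolding r0_def by auto
qed

lemma hilbert_dist_rho_interior:
  assumes "0 < \<rho>" and p: "p \<in> rho_interior C \<rho> - {0}" and q: "q \<in> rho_interior C \<rho> - {0}"
  shows "\<exists>\<beta> \<gamma>. hilbert_dist C p q = ereal (ln (\<beta> * \<gamma>)) \<and> 0 < \<beta> \<and> 0 < \<gamma> \<and>
     \<beta> *\<^sub>R p - q \<in> C \<and> \<gamma> *\<^sub>R q - p \<in> C \<and> 1 \<le> \<beta> * \<gamma> \<and> \<beta> * \<gamma> \<le> 1 / \<rho>\<^sup>2"
proof -
  obtain \<beta> where \<beta>: "hdelta C p q = ereal \<beta>" "0 < \<beta>" "\<beta> *\<^sub>R p - q \<in> C"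
    "\<beta> \<le> norm q / (\<rho> * norm p)"
    using hdelta_rho_interior[OF \<open>0 < \<rho>\<close>, of p q] p q rho_interior_subset by blast
  obtain \<gamma> where \<gamma>: "hdelta C q p = ereal \<gamma>" "0 < \<gamma>" "\<gamma> *\<^sub>R q - p \<in> C"
    "\<gamma> \<le> norm p / (\<rho> * norm q)"
    using hdelta_rho_interior[OF \<open>0 < \<rho>\<close>, of q p] p q rho_interior_subset by blast
  have "\<beta> * \<gamma> \<le> (norm q / (\<rho> * norm p)) * (norm p / (\<rho> * norm q))"
    using \<beta> \<gamma> by (intro mult_mono) auto
  also have "\<dots> = 1 / \<rho>\<^sup>2"
    using p q \<open>0 < \<rho>\<close> by (simp add: field_simps power2_eq_square)
  finally have "\<beta> * \<gamma> \<le> 1 / \<rho>\<^sup>2" .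
  moreover have "1 \<le> \<beta> * \<gamma>"
    using mutual_domination_product_ge_1[OF \<beta>(3) \<gamma>(3)] \<beta>(2) q rho_interior_subset by auto
  moreover have "hilbert_dist C p q = ereal (ln (\<beta> * \<gamma>))"
    unfolding hilbert_dist_def using \<beta>(1) \<gamma>(1) by simp
  ultimately show ?thesis using \<beta> \<gamma> by blast
qed

lemma hilbert_diam_finite:
  assumes "0 < \<rho>" "rho_interior C \<rho> \<noteq> {0}"
  obtains \<Delta> where "hilbert_diam C \<rho> = ereal \<Delta>" "0 \<le> \<Delta>"
proof -
  let ?R = "rho_interior C \<rho> - {0}"
  obtain p0 where p0: "p0 \<in> ?R" using assms(2) zero_mem_rho_interior by blast
  have "hilbert_dist C (fst x) (snd x) \<le> ereal (ln (1 / \<rho>\<^sup>2))" if x: "x \<in> ?R \<times> ?R" for x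
  proof -
    obtain \<beta> \<gamma> where "hilbert_dist C (fst x) (snd x) = ereal (ln (\<beta> * \<gamma>))"
      "1 \<le> \<beta> * \<gamma>" "\<beta> * \<gamma> \<le> 1 / \<rho>\<^sup>2"
      using hilbert_dist_rho_interior[OF assms(1)] x by (metis mem_Times_iff)
    moreover from this(2,3) have "ln (\<beta> * \<gamma>) \<le> ln (1 / \<rho>\<^sup>2)"
      by (subst ln_le_cancel_iff) auto
    ultimately show ?thesis by simp
  qed
  then have upper: "hilbert_diam C \<rho> \<le> ereal (ln (1 / \<rho>\<^sup>2))"
    unfolding hilbert_diam_def by (intro SUP_least) auto
  obtain \<beta> \<gamma> where "hilbert_dist C p0 p0 = ereal (ln (\<beta> * \<gamma>))" "1 \<le> \<beta> * \<gamma>"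
    using hilbert_dist_rho_interior[OF assms(1) p0 p0] by blast
  then have "ereal 0 \<le> hilbert_dist C p0 p0" by simp
  also have "hilbert_dist C p0 p0 \<le> hilbert_diam C \<rho>"
    unfolding hilbert_diam_def using p0 by (intro SUP_upper2[of "(p0, p0)"]) auto
  finally show ?thesis using upper that by (cases "hilbert_diam C \<rho>") auto
qed

lemma eta_const_bounds:
  assumes "0 < \<rho>" "rho_interior C \<rho> \<noteq> {0}"
  shows "0 \<le> eta_const C \<rho>" "eta_const C \<rho> < 1"
proof -
  obtain \<Delta> where "hilbert_diam C \<rho> = ereal \<Delta>" "0 \<le> \<Delta>"
    using hilbert_diam_finite[OF assms] .
  then show "0 \<le> eta_const C \<rho>" "eta_const C \<rho> < 1"
    unfolding eta_const_def by (simp_all add: tanh_real_nonneg_iff tanh_real_lt_1)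
qed


text \<open>Birkhoff's estimate: relative to \<open>p + q\<close>, the point \<open>p\<close> has projective oscillation
  \<open>c2 - c1 \<le> tanh(\<Delta>/4)\<close>; the witnesses \<open>c1 = 1/(1 + \<beta>)\<close> and \<open>c2 = \<gamma>/(1 + \<gamma>)\<close> come from
  the two Hilbert-metric factors \<open>\<beta>\<close>, \<open>\<gamma>\<close> of \<open>p\<close> and \<open>q\<close>.\<close>
lemma oscillation_le_eta_const:
  assumes "0 < \<rho>" and p: "p \<in> rho_interior C \<rho> - {0}" and q: "q \<in> rho_interior C \<rho> - {0}"
  obtains c1 c2 where "p - c1 *\<^sub>R (p + q) \<in> C" "c2 *\<^sub>R (p + q) - p \<in> C" "c2 - c1 \<le> eta_const C \<rho>"
proof -
  obtain \<beta> \<gamma> where bg: "hilbert_dist C p q = ereal (ln (\<beta> * \<gamma>))" "0 < \<beta>" "0 < \<gamma>"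
     "\<beta> *\<^sub>R p - q \<in> C" "\<gamma> *\<^sub>R q - p \<in> C" "1 \<le> \<beta> * \<gamma>"
    using hilbert_dist_rho_interior[OF assms] by blast
  obtain \<Delta> where \<Delta>: "hilbert_diam C \<rho> = ereal \<Delta>"
    using hilbert_diam_finite[OF \<open>0 < \<rho>\<close>] p zero_mem_rho_interior by blast
  have "hilbert_dist C p q \<le> hilbert_diam C \<rho>"
    unfolding hilbert_diam_def using p q by (intro SUP_upper2[of "(p, q)"]) auto
  then have "ln (\<beta> * \<gamma>) \<le> \<Delta>" using bg(1) \<Delta> by simp
  define c1 where "c1 = 1 / (1 + \<beta>)"
  define c2 where "c2 = \<gamma> / (1 + \<gamma>)"
  have "1 + \<beta> \<noteq> 0" "1 + \<gamma> \<noteq> 0" using bg(2,3) by simp_all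
  then have "p - c1 *\<^sub>R (p + q) = (1 / (1 + \<beta>)) *\<^sub>R (\<beta> *\<^sub>R p - q)"
    unfolding c1_def by (simp add: algebra_simps divide_simps)
      (simp add: scaleR_add_left[symmetric] add_divide_distrib[symmetric])
  then have "p - c1 *\<^sub>R (p + q) \<in> C" using bg by (simp add: scaleR_mem)
  moreover have "c2 *\<^sub>R (p + q) - p = (1 / (1 + \<gamma>)) *\<^sub>R (\<gamma> *\<^sub>R q - p)"
    using \<open>1 + \<gamma> \<noteq> 0\<close> unfolding c2_def by (simp add: algebra_simps divide_simps)
      (simp add: scaleR_add_left[symmetric] add_divide_distrib[symmetric])
  then have "c2 *\<^sub>R (p + q) - p \<in> C" using bg by (simp add: scaleR_mem)
  moreover have "c2 - c1 \<le> eta_const C \<rho>"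
  proof -
    have "c2 - c1 = (\<beta> * \<gamma> - 1) / ((1 + \<beta>) * (1 + \<gamma>))"
      unfolding c1_def c2_def using bg(2,3) by (simp add: field_simps)
    also have "\<dots> \<le> tanh (ln (\<beta> * \<gamma>) / 4)"
      using bg by (intro tanh_quarter_ln_product_ge) auto
    also have "\<dots> \<le> eta_const C \<rho>"
      unfolding eta_const_def using \<Delta> \<open>ln (\<beta> * \<gamma>) \<le> \<Delta>\<close> by (simp add: tanh_real_le_iff)
    finally show ?thesis .
  qed
  ultimately show ?thesis using that by blast
qed

text \<open>Birkhoff's contraction for order intervals: the oscillation bound applied to
  \<open>T(w - a v)\<close> and \<open>T(b v - w)\<close>, whose sum is \<open>(b - a) \<mu> f0\<close>, shrinks the interval by \<open>\<eta>\<close>.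
  If \<open>w\<close> is an endpoint, one of them vanishes and \<open>T w / \<mu>\<close> is a multiple of \<open>f0\<close>.\<close>
lemma order_interval_contraction:
  assumes "linear T" and T: "T ` (C - {0}) \<subseteq> rho_interior C \<rho> - {0}" and "0 < \<rho>"
    and v: "v \<in> C" "v \<noteq> 0" and "\<mu> > 0" and Tv: "T v = \<mu> *\<^sub>R f0"
    and w: "w - a *\<^sub>R v \<in> C" "b *\<^sub>R v - w \<in> C"
  obtains a' b' where "(1/\<mu>) *\<^sub>R T w - a' *\<^sub>R f0 \<in> C" "b' *\<^sub>R f0 - (1/\<mu>) *\<^sub>R T w \<in> C"
    "b' - a' \<le> eta_const C \<rho> * (b - a)"
proof -
  interpret T: linear T by fact
  have "a \<le> b" by (rule sandwich_le[OF v w])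
  have "rho_interior C \<rho> \<noteq> {0}" using T v by blast
  then have "0 \<le> eta_const C \<rho> * (b - a)"
    using eta_const_bounds(1)[OF \<open>0 < \<rho>\<close>] \<open>a \<le> b\<close> by simp
  define u where "u = w - a *\<^sub>R v"
  define u' where "u' = b *\<^sub>R v - w"
  have T_multiple: "T (c *\<^sub>R v) = (c * \<mu>) *\<^sub>R f0" for c by (simp add: T.scale Tv)
  consider "u = 0" | "u' = 0" | "u \<noteq> 0" "u' \<noteq> 0" by blast
  then show ?thesis
  proof cases
    case 1
    then have "(1/\<mu>) *\<^sub>R T w = a *\<^sub>R f0" unfolding u_def using \<open>\<mu> > 0\<close> by (simp add: T_multiple)
    then show ?thesis using that[of a a] \<open>0 \<le> eta_const C \<rho> * (b - a)\<close> zero_mem by simp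
  next
    case 2
    then have "w = b *\<^sub>R v" unfolding u'_def by simp
    then have "(1/\<mu>) *\<^sub>R T w = b *\<^sub>R f0" using \<open>\<mu> > 0\<close> by (simp add: T_multiple)
    then show ?thesis using that[of b b] \<open>0 \<le> eta_const C \<rho> * (b - a)\<close> zero_mem by simp
  next
    case 3
    have p: "T u \<in> rho_interior C \<rho> - {0}" and q: "T u' \<in> rho_interior C \<rho> - {0}"
      using T w 3 unfolding u_def u'_def by blast+
    obtain c1 c2 where c: "T u - c1 *\<^sub>R (T u + T u') \<in> C" "c2 *\<^sub>R (T u + T u') - T u \<in> C"
      "c2 - c1 \<le> eta_const C \<rho>"
      using oscillation_le_eta_const[OF \<open>0 < \<rho>\<close> p q] by blast
    have "T u + T u' = T ((b - a) *\<^sub>R v)"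
      unfolding u_def u'_def T.add[symmetric] by (simp add: algebra_simps)
    then have sum: "T u + T u' = ((b - a) * \<mu>) *\<^sub>R f0" by (simp add: T_multiple)
    have Tw: "T w = (a * \<mu>) *\<^sub>R f0 + T u"
      unfolding u_def by (simp add: T.diff T_multiple)
    define a' where "a' = a + c1 * (b - a)"
    define b' where "b' = a + c2 * (b - a)"
    have "(1/\<mu>) *\<^sub>R T w - a' *\<^sub>R f0 = (1/\<mu>) *\<^sub>R (T u - c1 *\<^sub>R (T u + T u'))"
      unfolding Tw sum a'_def using \<open>\<mu> > 0\<close> by (simp add: algebra_simps scaleR_add_left)
    then have "(1/\<mu>) *\<^sub>R T w - a' *\<^sub>R f0 \<in> C" using c \<open>\<mu> > 0\<close> by (simp add: scaleR_mem)
    moreover have "b' *\<^sub>R f0 - (1/\<mu>) *\<^sub>R T w = (1/\<mu>) *\<^sub>R (c2 *\<^sub>R (T u + T u') - T u)"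
      unfolding Tw sum b'_def using \<open>\<mu> > 0\<close> by (simp add: algebra_simps scaleR_add_left)
    then have "b' *\<^sub>R f0 - (1/\<mu>) *\<^sub>R T w \<in> C" using c \<open>\<mu> > 0\<close> by (simp add: scaleR_mem)
    moreover have "b' - a' = (c2 - c1) * (b - a)" unfolding a'_def b'_def by (simp add: algebra_simps)
    then have "b' - a' \<le> eta_const C \<rho> * (b - a)" using c(3) \<open>a \<le> b\<close> by (simp add: mult_right_mono)
    ultimately show ?thesis using that by blast
  qed
qed

end

lemma normalization_remainder_eq:
  fixes P Z :: "'a::real_vector" and l m :: real
  assumes "l \<noteq> 0" "l + m \<noteq> 0"
  shows "(1 / (l + m)) *\<^sub>R (P + Z) - (1 / l) *\<^sub>R P - (1 / l) *\<^sub>R (Z - m *\<^sub>R ((1 / l) *\<^sub>R P))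
       = (m\<^sup>2 / (l\<^sup>2 * (l + m))) *\<^sub>R P - (m / (l * (l + m))) *\<^sub>R Z"
proof -
  have "1 / (l + m) - 1 / l + m / (l * l) = m\<^sup>2 / (l\<^sup>2 * (l + m))"
    using assms by (simp add: divide_simps power2_eq_square) (simp add: algebra_simps)
  moreover have "1 / (l + m) - 1 / l = - (m / (l * (l + m)))"
    using assms by (simp add: field_simps)
  moreover have "(1 / (l + m)) *\<^sub>R (P + Z) - (1 / l) *\<^sub>R P - (1 / l) *\<^sub>R (Z - m *\<^sub>R ((1 / l) *\<^sub>R P))
      = (1 / (l + m) - 1 / l + m / (l * l)) *\<^sub>R P + (1 / (l + m) - 1 / l) *\<^sub>R Z"
    by (simp add: algebra_simps scaleR_add_left scaleR_diff_left)
  ultimately show ?thesis by simp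
qed

locale cone_hyps =
  fixes C :: "'e::banach set" and lf :: "'e \<Rightarrow> real" and K \<rho> :: real
  assumes setting: "cone_setting C lf K \<rho>"
begin

sublocale proper_cone C
  using setting unfolding cone_setting_def by unfold_locales auto

lemma lf_bounded_linear: "bounded_linear lf"
  and onorm_lf: "onorm lf = 1"
  and K_ge_1: "1 \<le> K"
  and rho_pos: "0 < \<rho>"
  and rho_le_1: "\<rho> \<le> 1"
  and rho_interior_ne: "rho_interior C \<rho> \<noteq> {0}"
  using setting unfolding cone_setting_def by auto

sublocale lf: bounded_linear lf
  by (rule lf_bounded_linear)

lemma abs_lf_le_norm: "\<bar>lf x\<bar> \<le> norm x"
  using onorm[OF lf_bounded_linear, of x] onorm_lf by simp

lemma norm_le_K_lf: "x \<in> C \<Longrightarrow> norm x \<le> K * lf x"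
  using setting K_ge_1 unfolding cone_setting_def by (auto simp: field_simps)

lemma lf_nonneg:
  assumes "x \<in> C"
  shows "0 \<le> lf x"
proof -
  have "0 \<le> K * lf x" using norm_le_K_lf[OF assms] norm_ge_zero order_trans by blast
  then show ?thesis using K_ge_1 by (simp add: zero_le_mult_iff)
qed

lemma eta_const_nonneg: "0 \<le> eta_const C \<rho>"
  and eta_const_less_1: "eta_const C \<rho> < 1"
  using eta_const_bounds[OF rho_pos rho_interior_ne] by auto

lemma normalized_partD:
  assumes "\<phi> \<in> normalized_part C \<rho> lf"
  shows "\<phi> \<in> rho_interior C \<rho>" "\<phi> \<in> C" "lf \<phi> = 1" "\<phi> \<noteq> 0" "1 \<le> norm \<phi>" "norm \<phi> \<le> K"
proof -
  show "\<phi> \<in> rho_interior C \<rho>" "lf \<phi> = 1" using assms unfolding normalized_part_def by auto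
  then show "\<phi> \<in> C" "\<phi> \<noteq> 0" using rho_interior_subset by auto
  show "1 \<le> norm \<phi>" using abs_lf_le_norm[of \<phi>] \<open>lf \<phi> = 1\<close> by simp
  show "norm \<phi> \<le> K" using norm_le_K_lf[OF \<open>\<phi> \<in> C\<close>] \<open>lf \<phi> = 1\<close> by simp
qed

text \<open>For \<open>\<parallel>e\<parallel> = \<rho>\<parallel>\<phi>\<parallel>\<close> both \<open>\<phi> + e\<close> and \<open>\<phi> - e\<close> lie in \<open>C\<close>, so
  \<open>2\<parallel>T e\<parallel> \<le> \<parallel>T(\<phi> + e)\<parallel> + \<parallel>T(\<phi> - e)\<parallel> \<le> K lf(T(\<phi> + e)) + K lf(T(\<phi> - e)) = 2 K lf(T \<phi>)\<close>.\<close>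
lemma onorm_le_lf_rho_interior:
  assumes "bounded_linear T" and T_C: "T ` C \<subseteq> C"
    and \<phi>: "\<phi> \<in> rho_interior C \<rho>" "\<phi> \<noteq> 0"
  shows "\<rho> * norm \<phi> * onorm T \<le> K * lf (T \<phi>)"
proof -
  interpret T: bounded_linear T by fact
  have r: "\<rho> * norm \<phi> > 0" using rho_pos \<phi>(2) by simp
  have "T \<phi> \<in> C" using T_C \<phi>(1) rho_interior_subset by blast
  then have "0 \<le> K * lf (T \<phi>)" using lf_nonneg K_ge_1 by simp
  have "norm (T x) \<le> K * lf (T \<phi>) / (\<rho> * norm \<phi>) * norm x" for x
  proof (cases "x = 0")
    case False
    define c where "c = \<rho> * norm \<phi> / norm x"
    have "c > 0" using r False unfolding c_def by simp
    define e where "e = c *\<^sub>R x"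
    have "norm e = \<rho> * norm \<phi>" using False \<open>c > 0\<close> r unfolding e_def c_def by simp
    then have "\<phi> + e \<in> C" "\<phi> + - e \<in> C"
      using rho_interior_add_mem[OF \<phi>(1), of e] rho_interior_add_mem[OF \<phi>(1), of "- e"] by simp_all
    then have plus: "T (\<phi> + e) \<in> C" and minus: "T (\<phi> + - e) \<in> C" using T_C by blast+
    have "T (\<phi> + e) - T (\<phi> + - e) = 2 *\<^sub>R T e" by (simp add: T.add T.neg T.diff scaleR_2)
    then have "2 * norm (T e) = norm (T (\<phi> + e) - T (\<phi> + - e))" by simp
    also have "\<dots> \<le> K * lf (T (\<phi> + e)) + K * lf (T (\<phi> + - e))"
      using norm_triangle_ineq4[of "T (\<phi> + e)" "T (\<phi> + - e)"] norm_le_K_lf[OF plus] norm_le_K_lf[OF minus]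
      by linarith
    also have "\<dots> = 2 * (K * lf (T \<phi>))" by (simp add: T.add T.neg T.diff lf.add lf.neg lf.diff algebra_simps)
    finally have "c * norm (T x) \<le> K * lf (T \<phi>)" unfolding e_def using \<open>c > 0\<close> by (simp add: T.scaleR)
    then show ?thesis using \<open>c > 0\<close> False unfolding c_def by (simp add: field_simps)
  qed simp
  then have "onorm T \<le> K * lf (T \<phi>) / (\<rho> * norm \<phi>)"
    using \<open>0 \<le> K * lf (T \<phi>)\<close> r by (intro onorm_bound) auto
  then show ?thesis using r by (simp add: field_simps)
qed

lemma operator_classD:
  assumes "T \<in> operator_class C \<rho> \<theta>"
  shows "bounded_linear T" "T ` (C - {0}) \<subseteq> rho_interior C \<rho> - {0}"
    "1 / \<theta> \<le> onorm T" "onorm T \<le> \<theta>"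
  using assms unfolding operator_class_def by auto

lemma operator_class_mem:
  assumes "T \<in> operator_class C \<rho> \<theta>" "x \<in> C"
  shows "T x \<in> C"
proof (cases "x = 0")
  case True
  then show ?thesis using linear_0[OF bounded_linear.linear[OF operator_classD(1)[OF assms(1)]]] zero_mem
    by simp
next
  case False
  then show ?thesis using operator_classD(2)[OF assms(1)] assms(2) rho_interior_subset by blast
qed

lemma operator_class_norm_le:
  assumes "T \<in> operator_class C \<rho> \<theta>"
  shows "norm (T x) \<le> \<theta> * norm x"
proof -
  have "norm (T x) \<le> onorm T * norm x" by (rule onorm[OF operator_classD(1)[OF assms]])
  also have "\<dots> \<le> \<theta> * norm x" using operator_classD(4)[OF assms] by (simp add: mult_right_mono)
  finally show ?thesis .
qed

lemma lf_operator_normalized_ge: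
  assumes T: "T \<in> operator_class C \<rho> \<theta>" and \<phi>: "\<phi> \<in> normalized_part C \<rho> lf" and "0 < \<theta>"
  shows "\<rho> / (K * \<theta>) \<le> lf (T \<phi>)"
proof -
  have "\<rho> * 1 * (1 / \<theta>) \<le> \<rho> * norm \<phi> * onorm T"
    using normalized_partD(5)[OF \<phi>] operator_classD(3)[OF T] rho_pos \<open>0 < \<theta>\<close>
    by (intro mult_mono) auto
  also have "\<dots> \<le> K * lf (T \<phi>)"
    using operator_class_mem[OF T] normalized_partD[OF \<phi>]
    by (intro onorm_le_lf_rho_interior operator_classD(1)[OF T]) auto
  finally show ?thesis using K_ge_1 \<open>0 < \<theta>\<close> by (simp add: field_simps)
qed

lemma norm_le_order_interval:
  assumes "y - a *\<^sub>R f0 \<in> C" "b *\<^sub>R f0 - y \<in> C" "lf y = 0" "lf f0 = 1"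
  shows "norm y \<le> K / 2 * (b - a)"
proof -
  define u where "u = y - a *\<^sub>R f0"
  define v where "v = b *\<^sub>R f0 - y"
  have "lf u = - a" "lf v = b" unfolding u_def v_def using assms by (simp_all add: lf.diff lf.scaleR)
  moreover have "0 \<le> lf u" "0 \<le> lf v" using lf_nonneg assms(1,2) unfolding u_def v_def by auto
  ultimately have "a \<le> 0" "0 \<le> b" by simp_all
  show ?thesis
  proof (cases "a = b")
    case True
    then have "y = 0" using assms(1,2) \<open>a \<le> 0\<close> \<open>0 \<le> b\<close> eq_0_if_neg_mem by simp
    then show ?thesis using True by simp
  next
    case False
    then have "b - a > 0" using \<open>a \<le> 0\<close> \<open>0 \<le> b\<close> by simp
    have "(b - a) *\<^sub>R y = b *\<^sub>R u + a *\<^sub>R v" unfolding u_def v_def by (simp add: algebra_simps)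
    then have "(b - a) * norm y = norm (b *\<^sub>R u + a *\<^sub>R v)"
      using \<open>b - a > 0\<close> by (metis abs_of_pos norm_scaleR)
    also have "\<dots> \<le> b * norm u + (- a) * norm v"
      using norm_triangle_ineq[of "b *\<^sub>R u" "a *\<^sub>R v"] \<open>a \<le> 0\<close> \<open>0 \<le> b\<close> by simp
    also have "\<dots> \<le> b * (K * lf u) + (- a) * (K * lf v)"
      using norm_le_K_lf assms(1,2) \<open>a \<le> 0\<close> \<open>0 \<le> b\<close> unfolding u_def v_def
      by (intro add_mono mult_left_mono) auto
    also have "\<dots> = K * (2 * (b * (- a)))" using \<open>lf u = - a\<close> \<open>lf v = b\<close> by (simp add: algebra_simps)
    also have "\<dots> \<le> K * ((b - a) * (b - a) / 2)"
    proof -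
      have "0 \<le> (b + a) * (b + a)" by simp
      then show ?thesis using K_ge_1 by (intro mult_left_mono) (auto simp: algebra_simps)
    qed
    finally have "(b - a) * norm y \<le> (b - a) * (K / 2 * (b - a))" by (simp add: algebra_simps)
    then show ?thesis using \<open>b - a > 0\<close> by simp
  qed
qed


text \<open>The smallness condition on \<open>z\<close> gives \<open>|lf(T z)| \<le> \<lambda>/2\<close> with \<open>\<lambda> = lf(T \<phi>) \<ge> \<rho>/(K\<theta>)\<close>,
  which keeps the denominators of the remainder away from 0.\<close>
lemma normalization_remainder_le:
  assumes T: "T \<in> operator_class C \<rho> \<theta>" and "1 \<le> \<theta>"
    and \<phi>: "\<phi> \<in> normalized_part C \<rho> lf"
    and z: "norm z \<le> S" and S: "S < \<rho> / (2 * \<theta>\<^sup>2 * K)"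
  shows "norm ((1 / lf (T (\<phi> + z))) *\<^sub>R T (\<phi> + z) - (1 / lf (T \<phi>)) *\<^sub>R T \<phi>
           - (1 / lf (T \<phi>)) *\<^sub>R (T z - lf (T z) *\<^sub>R ((1 / lf (T \<phi>)) *\<^sub>R T \<phi>)))
         \<le> 2 * (K + 1) * K\<^sup>2 * \<theta> ^ 4 / \<rho>\<^sup>2 * S\<^sup>2"
proof -
  interpret T: bounded_linear T by (rule operator_classD(1)[OF T])
  define l0 where "l0 = \<rho> / (K * \<theta>)"
  define l where "l = lf (T \<phi>)"
  define m where "m = lf (T z)"
  have "0 < \<theta>" "0 < l0" using \<open>1 \<le> \<theta>\<close> rho_pos K_ge_1 unfolding l0_def by auto
  have "0 \<le> S" using z norm_ge_zero[of z] by linarith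
  have "l0 \<le> l" unfolding l0_def l_def using lf_operator_normalized_ge[OF T \<phi> \<open>0 < \<theta>\<close>] .
  have nZ: "norm (T z) \<le> \<theta> * S"
    using operator_class_norm_le[OF T, of z] z \<open>0 < \<theta>\<close> by (meson mult_left_mono less_imp_le order_trans)
  have m: "\<bar>m\<bar> \<le> \<theta> * S" using abs_lf_le_norm[of "T z"] nZ unfolding m_def by simp
  have "\<theta> * S < \<theta> * (\<rho> / (2 * \<theta>\<^sup>2 * K))" using mult_strict_left_mono[OF S \<open>0 < \<theta>\<close>] .
  also have "\<dots> = l0 / 2" unfolding l0_def using \<open>0 < \<theta>\<close> K_ge_1 by (simp add: power2_eq_square field_simps)
  finally have "\<theta> * S < l0 / 2" .
  then have "l / 2 \<le> l + m" "0 < l" using m \<open>l0 \<le> l\<close> \<open>0 < l0\<close> by (auto simp: abs_le_iff)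
  then have "0 < l + m" by simp
  have nP: "norm (T \<phi>) \<le> K * l"
    unfolding l_def using norm_le_K_lf operator_class_mem[OF T] normalized_partD[OF \<phi>] by blast
  have "\<bar>m\<^sup>2 / (l\<^sup>2 * (l + m))\<bar> = m\<^sup>2 / (l\<^sup>2 * (l + m))" using \<open>0 < l + m\<close> by simp
  also have "\<dots> \<le> m\<^sup>2 / (l\<^sup>2 * (l / 2))"
    using \<open>l / 2 \<le> l + m\<close> \<open>0 < l\<close> \<open>0 < l + m\<close> by (intro divide_left_mono mult_left_mono) auto
  finally have "\<bar>m\<^sup>2 / (l\<^sup>2 * (l + m))\<bar> * norm (T \<phi>) \<le> m\<^sup>2 / (l\<^sup>2 * (l / 2)) * (K * l)"
    using nP \<open>0 < l\<close> by (intro mult_mono) auto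
  also have "\<dots> = 2 * K * m\<^sup>2 / l\<^sup>2" using \<open>0 < l\<close> by (simp add: field_simps power2_eq_square)
  also have "\<dots> \<le> 2 * K * (\<theta> * S)\<^sup>2 / l0\<^sup>2"
  proof (intro divide_mono mult_left_mono)
    show "m\<^sup>2 \<le> (\<theta> * S)\<^sup>2" using m by (metis abs_ge_zero power2_abs power_mono)
    show "l0\<^sup>2 \<le> l\<^sup>2" using \<open>l0 \<le> l\<close> \<open>0 < l0\<close> by (simp add: power_mono)
  qed (use K_ge_1 \<open>0 < l0\<close> in auto)
  finally have bound_P: "\<bar>m\<^sup>2 / (l\<^sup>2 * (l + m))\<bar> * norm (T \<phi>) \<le> 2 * K * (\<theta> * S)\<^sup>2 / l0\<^sup>2" .
  have "\<bar>m / (l * (l + m))\<bar> = \<bar>m\<bar> / (l * (l + m))" using \<open>0 < l\<close> \<open>0 < l + m\<close> by (simp add: abs_div)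
  also have "\<dots> \<le> \<bar>m\<bar> / (l * (l / 2))"
    using \<open>l / 2 \<le> l + m\<close> \<open>0 < l\<close> \<open>0 < l + m\<close> by (intro divide_left_mono mult_left_mono) auto
  finally have "\<bar>m / (l * (l + m))\<bar> * norm (T z) \<le> \<bar>m\<bar> / (l * (l / 2)) * (\<theta> * S)"
    using nZ by (intro mult_mono) auto
  also have "\<dots> = 2 * \<bar>m\<bar> * (\<theta> * S) / l\<^sup>2" using \<open>0 < l\<close> by (simp add: field_simps power2_eq_square)
  also have "\<dots> \<le> 2 * (\<theta> * S) * (\<theta> * S) / l0\<^sup>2"
  proof (intro divide_mono mult_right_mono mult_left_mono)
    show "l0\<^sup>2 \<le> l\<^sup>2" using \<open>l0 \<le> l\<close> \<open>0 < l0\<close> by (simp add: power_mono)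
  qed (use m \<open>0 < \<theta>\<close> \<open>0 \<le> S\<close> \<open>0 < l0\<close> in auto)
  finally have bound_Z: "\<bar>m / (l * (l + m))\<bar> * norm (T z) \<le> 2 * (\<theta> * S)\<^sup>2 / l0\<^sup>2"
    by (simp add: power2_eq_square)
  have "lf (T (\<phi> + z)) = l + m" unfolding l_def m_def by (simp add: T.add lf.add)
  have eq: "(1 / lf (T (\<phi> + z))) *\<^sub>R T (\<phi> + z) - (1 / lf (T \<phi>)) *\<^sub>R T \<phi>
           - (1 / lf (T \<phi>)) *\<^sub>R (T z - lf (T z) *\<^sub>R ((1 / lf (T \<phi>)) *\<^sub>R T \<phi>))
      = (m\<^sup>2 / (l\<^sup>2 * (l + m))) *\<^sub>R T \<phi> - (m / (l * (l + m))) *\<^sub>R T z"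
    unfolding \<open>lf (T (\<phi> + z)) = l + m\<close> unfolding T.add l_def[symmetric] m_def[symmetric]
    by (rule normalization_remainder_eq) (use \<open>0 < l\<close> \<open>0 < l + m\<close> in auto)
  have "norm ((m\<^sup>2 / (l\<^sup>2 * (l + m))) *\<^sub>R T \<phi> - (m / (l * (l + m))) *\<^sub>R T z)
      \<le> \<bar>m\<^sup>2 / (l\<^sup>2 * (l + m))\<bar> * norm (T \<phi>) + \<bar>m / (l * (l + m))\<bar> * norm (T z)"
    using norm_triangle_ineq4[of "(m\<^sup>2 / (l\<^sup>2 * (l + m))) *\<^sub>R T \<phi>" "(m / (l * (l + m))) *\<^sub>R T z"]
    by (simp only: norm_scaleR)
  also have "\<dots> \<le> 2 * K * (\<theta> * S)\<^sup>2 / l0\<^sup>2 + 2 * (\<theta> * S)\<^sup>2 / l0\<^sup>2"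
    by (rule add_mono[OF bound_P bound_Z])
  also have "\<dots> = 2 * (K + 1) * K\<^sup>2 * \<theta> ^ 4 / \<rho>\<^sup>2 * S\<^sup>2"
    unfolding l0_def using rho_pos K_ge_1 \<open>0 < \<theta>\<close>
    by (simp add: field_simps power2_eq_square power4_eq_xxxx)
  finally show ?thesis unfolding eq .
qed

end

lemma Xsp_bochner_meas: "z \<in> Xsp M \<Longrightarrow> bochner_meas M z"
  unfolding Xsp_def by blast

lemma Xsp_outside: "z \<in> Xsp M \<Longrightarrow> \<omega> \<notin> space M \<Longrightarrow> z \<omega> = 0"
  unfolding Xsp_def by blast

lemma XspI:
  assumes "bochner_meas M z" "\<And>\<omega>. \<omega> \<in> space M \<Longrightarrow> norm (z \<omega>) \<le> B"
    and "\<And>\<omega>. \<omega> \<notin> space M \<Longrightarrow> z \<omega> = 0"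
  shows "z \<in> Xsp M"
  unfolding Xsp_def using assms by (auto simp: bounded_iff)

lemma norm_le_supn:
  assumes "z \<in> Xsp M" "\<omega> \<in> space M"
  shows "norm (z \<omega>) \<le> supn M z"
proof -
  obtain B where "\<forall>x\<in>z ` space M. norm x \<le> B"
    using assms(1) unfolding Xsp_def bounded_iff by blast
  then have "bdd_above ((\<lambda>\<omega>. norm (z \<omega>)) ` space M)" by (intro bdd_aboveI[of _ B]) auto
  then show ?thesis unfolding supn_def using assms(2) by (rule cSUP_upper2) simp
qed

lemma supn_le:
  "space M \<noteq> {} \<Longrightarrow> (\<And>\<omega>. \<omega> \<in> space M \<Longrightarrow> norm (z \<omega>) \<le> B) \<Longrightarrow> supn M z \<le> B"
  unfolding supn_def by (rule cSUP_least)

lemma supn_nonneg: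
  assumes "z \<in> Xsp M" "space M \<noteq> {}"
  shows "0 \<le> supn M z"
proof -
  obtain \<omega> where "\<omega> \<in> space M" using assms(2) by blast
  then have "norm (z \<omega>) \<le> supn M z" by (rule norm_le_supn[OF assms(1)])
  then show ?thesis by (rule order_trans[OF norm_ge_zero])
qed

locale random_hyps =
  fixes C :: "'e::banach set" and lf :: "'e \<Rightarrow> real" and K \<rho> \<theta> :: real
    and MM :: "('e \<Rightarrow> 'e) set" and M :: "'w measure" and \<tau> \<tau>i :: "'w \<Rightarrow> 'w"
    and LL :: "'w \<Rightarrow> 'e \<Rightarrow> 'e"
  assumes full: "full_setting C lf K \<rho> \<theta> MM M \<tau> \<tau>i LL"
begin

sublocale cone_hyps C lf K \<rho>
  using full unfolding full_setting_def by unfold_locales blast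

lemma theta_ge_1: "1 \<le> \<theta>"
  and prob_space: "prob_space M"
  and tau_inv_mem: "\<And>\<omega>. \<omega> \<in> space M \<Longrightarrow> \<tau>i \<omega> \<in> space M"
  and LL_operator_class: "\<And>\<omega>. \<omega> \<in> space M \<Longrightarrow> LL \<omega> \<in> operator_class C \<rho> \<theta>"
  and Lop_bochner_meas: "\<And>z. z \<in> Xsp M \<Longrightarrow> bochner_meas M (Lop M \<tau>i LL z)"
  using full unfolding full_setting_def by blast+

lemma space_ne: "space M \<noteq> {}"
  using prob_space.not_empty[OF prob_space] .

lemma Lop_inside: "\<omega> \<in> space M \<Longrightarrow> Lop M \<tau>i LL z \<omega> = LL (\<tau>i \<omega>) (z (\<tau>i \<omega>))"
  unfolding Lop_def by simp

lemma Lop_outside: "\<omega> \<notin> space M \<Longrightarrow> Lop M \<tau>i LL z \<omega> = 0"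
  unfolding Lop_def by simp

lemma piop_remainder_le:
  assumes "\<phi> \<in> Xsp M" "z \<in> Xsp M"
    and \<phi>: "\<forall>\<omega>\<in>space M. \<phi> \<omega> \<in> normalized_part C \<rho> lf"
    and z: "supn M z < \<rho> / (2 * \<theta>\<^sup>2 * K)"
  shows "supn M (\<lambda>\<omega>. piop M lf \<tau>i LL (\<lambda>\<omega>'. \<phi> \<omega>' + z \<omega>') \<omega> - piop M lf \<tau>i LL \<phi> \<omega>
                         - Qop M lf \<tau>i LL \<phi> z \<omega>)
            \<le> 2 * (K + 1) * K\<^sup>2 * \<theta> ^ 4 / \<rho>\<^sup>2 * (supn M z)\<^sup>2"
proof (rule supn_le[OF space_ne])
  fix \<omega> assume "\<omega> \<in> space M"
  then have "\<tau>i \<omega> \<in> space M" by (rule tau_inv_mem)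
  from normalization_remainder_le[OF LL_operator_class[OF this] theta_ge_1 \<phi>[rule_format, OF this]
      norm_le_supn[OF assms(2) this] z]
  show "norm (piop M lf \<tau>i LL (\<lambda>\<omega>'. \<phi> \<omega>' + z \<omega>') \<omega> - piop M lf \<tau>i LL \<phi> \<omega>
           - Qop M lf \<tau>i LL \<phi> z \<omega>) \<le> 2 * (K + 1) * K\<^sup>2 * \<theta> ^ 4 / \<rho>\<^sup>2 * (supn M z)\<^sup>2"
    unfolding Qop_def piop_def Lam_def Lop_inside[OF \<open>\<omega> \<in> space M\<close>] by simp
qed

end

section \<open>The derivative at the fixed point and its Neumann series\<close>

locale fixed_point_hyps = random_hyps C lf K \<rho> \<theta> MM M \<tau> \<tau>i LL
  for C :: "'e::banach set" and lf K \<rho> \<theta> MM and M :: "'w measure" and \<tau> \<tau>i LL +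
  fixes f :: "'w \<Rightarrow> 'e"
  assumes f_Xsp: "f \<in> Xsp M"
    and f_normalized: "\<forall>\<omega>\<in>space M. f \<omega> \<in> normalized_part C \<rho> lf"
    and f_fixed: "\<forall>\<omega>\<in>space M. piop M lf \<tau>i LL f \<omega> = f \<omega>"
begin

abbreviation Q where "Q \<equiv> Qop M lf \<tau>i LL f"

abbreviation \<eta> where "\<eta> \<equiv> eta_const C \<rho>"

definition lam :: "'w \<Rightarrow> real" where "lam \<omega> = lf (LL (\<tau>i \<omega>) (f (\<tau>i \<omega>)))"

lemma lam_ge: "\<omega> \<in> space M \<Longrightarrow> \<rho> / (K * \<theta>) \<le> lam \<omega>"
  unfolding lam_def using theta_ge_1
  by (intro lf_operator_normalized_ge LL_operator_class tau_inv_mem f_normalized[rule_format]) auto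

lemma lam_pos: "\<omega> \<in> space M \<Longrightarrow> 0 < lam \<omega>"
  using rho_pos K_ge_1 theta_ge_1 by (intro less_le_trans[OF _ lam_ge]) auto

lemma Lam_f: "\<omega> \<in> space M \<Longrightarrow> Lam M lf \<tau>i LL f \<omega> = lam \<omega>"
  unfolding Lam_def lam_def Lop_def by simp

lemma LL_f_eq_scaleR:
  assumes "\<omega> \<in> space M"
  shows "LL (\<tau>i \<omega>) (f (\<tau>i \<omega>)) = lam \<omega> *\<^sub>R f \<omega>"
proof -
  have "(1 / lam \<omega>) *\<^sub>R LL (\<tau>i \<omega>) (f (\<tau>i \<omega>)) = f \<omega>"
    using f_fixed assms unfolding piop_def by (simp add: Lam_f Lop_inside)
  then have "lam \<omega> *\<^sub>R ((1 / lam \<omega>) *\<^sub>R LL (\<tau>i \<omega>) (f (\<tau>i \<omega>))) = lam \<omega> *\<^sub>R f \<omega>" by simp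
  then show ?thesis using lam_pos[OF assms] by simp
qed

lemma piop_f: "piop M lf \<tau>i LL f \<omega> = f \<omega>"
  using f_fixed Xsp_outside[OF f_Xsp] by (cases "\<omega> \<in> space M") (auto simp: piop_def Lop_outside)

definition fiber_map :: "'w \<Rightarrow> 'e \<Rightarrow> 'e" where
  "fiber_map \<omega> e = (1 / lam \<omega>) *\<^sub>R (LL (\<tau>i \<omega>) e - lf (LL (\<tau>i \<omega>) e) *\<^sub>R f \<omega>)"

lemma fiber_map_bounded_linear: "\<omega> \<in> space M \<Longrightarrow> bounded_linear (fiber_map \<omega>)"
  unfolding fiber_map_def using operator_classD(1)[OF LL_operator_class[OF tau_inv_mem]]
  by (intro bounded_linear_intros bounded_linear_compose[OF lf_bounded_linear] bounded_linear_scaleR_left)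

lemma Q_inside: "\<omega> \<in> space M \<Longrightarrow> Q g \<omega> = fiber_map \<omega> (g (\<tau>i \<omega>))"
  unfolding Qop_def piop_f Lam_def Lop_inside fiber_map_def lam_def by simp

lemma Q_outside: "\<omega> \<notin> space M \<Longrightarrow> Q g \<omega> = 0"
  unfolding Qop_def Lam_def Lop_outside by simp

lemma lf_Q: "\<omega> \<in> space M \<Longrightarrow> lf (Q g \<omega>) = 0"
  using normalized_partD(3) f_normalized lam_pos[of \<omega>]
  by (simp add: Q_inside fiber_map_def lf.scaleR lf.diff)

lemma Q_add: "Q (\<lambda>\<omega>. g \<omega> + h \<omega>) = (\<lambda>\<omega>. Q g \<omega> + Q h \<omega>)"
proof
  fix \<omega> show "Q (\<lambda>\<omega>. g \<omega> + h \<omega>) \<omega> = Q g \<omega> + Q h \<omega>"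
    by (cases "\<omega> \<in> space M")
      (simp_all add: Q_inside Q_outside linear_add[OF bounded_linear.linear[OF fiber_map_bounded_linear]])
qed

lemma Q_scaleR: "Q (\<lambda>\<omega>. c *\<^sub>R g \<omega>) = (\<lambda>\<omega>. c *\<^sub>R Q g \<omega>)"
proof
  fix \<omega> show "Q (\<lambda>\<omega>. c *\<^sub>R g \<omega>) \<omega> = c *\<^sub>R Q g \<omega>"
    by (cases "\<omega> \<in> space M")
      (simp_all add: Q_inside Q_outside linear_cmul[OF bounded_linear.linear[OF fiber_map_bounded_linear]])
qed

lemma Q_diff: "Q (\<lambda>\<omega>. g \<omega> - h \<omega>) = (\<lambda>\<omega>. Q g \<omega> - Q h \<omega>)"
proof
  fix \<omega> show "Q (\<lambda>\<omega>. g \<omega> - h \<omega>) \<omega> = Q g \<omega> - Q h \<omega>"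
    by (cases "\<omega> \<in> space M")
      (simp_all add: Q_inside Q_outside linear_diff[OF bounded_linear.linear[OF fiber_map_bounded_linear]])
qed

lemma Q_power_add: "(Q ^^ n) (\<lambda>\<omega>. g \<omega> + h \<omega>) = (\<lambda>\<omega>. (Q ^^ n) g \<omega> + (Q ^^ n) h \<omega>)"
  by (induction n) (simp_all add: Q_add)

lemma Q_power_scaleR: "(Q ^^ n) (\<lambda>\<omega>. c *\<^sub>R g \<omega>) = (\<lambda>\<omega>. c *\<^sub>R (Q ^^ n) g \<omega>)"
  by (induction n) (simp_all add: Q_scaleR)

lemma Q_power_diff: "(Q ^^ n) (\<lambda>\<omega>. g \<omega> - h \<omega>) = (\<lambda>\<omega>. (Q ^^ n) g \<omega> - (Q ^^ n) h \<omega>)"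
  by (induction n) (simp_all add: Q_diff)

lemma Q_Xsp:
  assumes g: "g \<in> Xsp M"
  shows "Q g \<in> Xsp M"
proof -
  define S where "S = supn M g"
  define l0 where "l0 = \<rho> / (K * \<theta>)"
  have "0 < l0" unfolding l0_def using rho_pos K_ge_1 theta_ge_1 by simp
  have Lg: "norm (Lop M \<tau>i LL g \<omega>) \<le> \<theta> * S" if "\<omega> \<in> space M" for \<omega>
  proof -
    have "norm (Lop M \<tau>i LL g \<omega>) \<le> \<theta> * norm (g (\<tau>i \<omega>))"
      unfolding Lop_inside[OF that] by (rule operator_class_norm_le[OF LL_operator_class[OF tau_inv_mem[OF that]]])
    also have "\<dots> \<le> \<theta> * S" unfolding S_def
      using norm_le_supn[OF g tau_inv_mem[OF that]] theta_ge_1 by (intro mult_left_mono) auto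
    finally show ?thesis .
  qed
  have lfLg: "\<bar>lf (Lop M \<tau>i LL g \<omega>)\<bar> \<le> \<theta> * S" if "\<omega> \<in> space M" for \<omega>
    using abs_lf_le_norm Lg[OF that] order_trans by blast
  have f_le: "norm (f \<omega>) \<le> K" if "\<omega> \<in> space M" for \<omega>
    using normalized_partD(6) f_normalized that by blast
  have lfLg_f: "norm (lf (Lop M \<tau>i LL g \<omega>) *\<^sub>R f \<omega>) \<le> \<theta> * S * K" if "\<omega> \<in> space M" for \<omega>
    using lfLg[OF that] f_le[OF that] by (simp add: mult_mono')
  have diff_le: "norm (Lop M \<tau>i LL g \<omega> - lf (Lop M \<tau>i LL g \<omega>) *\<^sub>R f \<omega>) \<le> \<theta> * S + \<theta> * S * K"
    if "\<omega> \<in> space M" for \<omega>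
    using norm_triangle_ineq4[of "Lop M \<tau>i LL g \<omega>" "lf (Lop M \<tau>i LL g \<omega>) *\<^sub>R f \<omega>"] Lg[OF that] lfLg_f[OF that]
    by linarith
  have inv_lam: "\<bar>1 / lam \<omega>\<bar> \<le> 1 / l0" if "\<omega> \<in> space M" for \<omega>
    using lam_ge[OF that] \<open>0 < l0\<close> unfolding l0_def[symmetric] by (simp add: frac_le)
  have Q_eq: "Q g \<omega> = (1 / lam \<omega>) *\<^sub>R (Lop M \<tau>i LL g \<omega> - lf (Lop M \<tau>i LL g \<omega>) *\<^sub>R f \<omega>)"
    if "\<omega> \<in> space M" for \<omega>
    using that by (simp add: Q_inside fiber_map_def Lop_inside)
  have "bochner_meas M (\<lambda>\<omega>. lf (Lop M \<tau>i LL g \<omega>))"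
    by (rule bochner_meas_bounded_linear[OF Lop_bochner_meas[OF g] lf_bounded_linear])
  then have meas_diff: "bochner_meas M (\<lambda>\<omega>. Lop M \<tau>i LL g \<omega> - lf (Lop M \<tau>i LL g \<omega>) *\<^sub>R f \<omega>)"
    using lfLg f_le
    by (intro bochner_meas_diff Lop_bochner_meas[OF g] bochner_meas_scaleR Xsp_bochner_meas[OF f_Xsp]) auto
  have meas_inv: "bochner_meas M (\<lambda>\<omega>. 1 / lam \<omega>)"
  proof (rule bochner_meas_cong)
    show "bochner_meas M (\<lambda>\<omega>. 1 / lf (Lop M \<tau>i LL f \<omega>))"
      using lam_ge \<open>0 < l0\<close>
      by (intro bochner_meas_inverse bochner_meas_bounded_linear[OF Lop_bochner_meas[OF f_Xsp] lf_bounded_linear])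
        (auto simp: l0_def lam_def Lop_inside)
  qed (simp add: lam_def Lop_inside)
  have "bochner_meas M
      (\<lambda>\<omega>. (1 / lam \<omega>) *\<^sub>R (Lop M \<tau>i LL g \<omega> - lf (Lop M \<tau>i LL g \<omega>) *\<^sub>R f \<omega>))"
    by (rule bochner_meas_scaleR[OF meas_inv meas_diff, where Bg = "1 / l0" and Bh = "\<theta> * S + \<theta> * S * K"])
      (use inv_lam diff_le in auto)
  then have "bochner_meas M (Q g)" by (rule bochner_meas_cong) (simp add: Q_eq)
  then show ?thesis
  proof (rule XspI)
    fix \<omega> assume "\<omega> \<in> space M"
    have "norm (Q g \<omega>) = \<bar>1 / lam \<omega>\<bar> * norm (Lop M \<tau>i LL g \<omega> - lf (Lop M \<tau>i LL g \<omega>) *\<^sub>R f \<omega>)"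
      using Q_eq[OF \<open>\<omega> \<in> space M\<close>] by simp
    also have "\<dots> \<le> 1 / l0 * (\<theta> * S + \<theta> * S * K)"
      using inv_lam diff_le \<open>\<omega> \<in> space M\<close> \<open>0 < l0\<close> by (intro mult_mono) auto
    finally show "norm (Q g \<omega>) \<le> 1 / l0 * (\<theta> * S + \<theta> * S * K)" .
  qed (rule Q_outside)
qed

lemma Q_power_Xsp: "z \<in> Xsp M \<Longrightarrow> (Q ^^ n) z \<in> Xsp M"
  by (induction n) (simp_all add: Q_Xsp)


text \<open>The induction step is Birkhoff's contraction, which applies because \<open>f\<close> is an eigenvector
  field of the cocycle.\<close>
lemma Q_power_order_interval:
  assumes z: "z \<in> Xsp M"
  shows "\<omega> \<in> space M \<Longrightarrow> \<exists>a b. (Q ^^ n) z \<omega> - a *\<^sub>R f \<omega> \<in> C \<and> b *\<^sub>R f \<omega> - (Q ^^ n) z \<omega> \<in> C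
           \<and> b - a \<le> \<eta> ^ n * (2 * supn M z / \<rho>)"
proof (induction n arbitrary: \<omega>)
  case 0
  define c where "c = supn M z / \<rho>"
  have "0 \<le> c" unfolding c_def using supn_nonneg[OF z space_ne] rho_pos by simp
  have "norm (z \<omega>) \<le> c * (\<rho> * norm (f \<omega>))"
  proof -
    have "norm (z \<omega>) \<le> supn M z" by (rule norm_le_supn[OF z 0])
    also have "\<dots> \<le> supn M z * norm (f \<omega>)"
      using normalized_partD(5) f_normalized 0 supn_nonneg[OF z space_ne] by (simp add: mult_le_cancel_left1)
    finally show ?thesis unfolding c_def using rho_pos by simp
  qed
  moreover have "f \<omega> \<in> rho_interior C \<rho>" using normalized_partD(1) f_normalized 0 by blast
  ultimately have "c *\<^sub>R f \<omega> + z \<omega> \<in> C" "c *\<^sub>R f \<omega> + - z \<omega> \<in> C"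
    using rho_interior_add_scaled_mem[OF _ \<open>0 \<le> c\<close>, where p = "f \<omega>" and x = "z \<omega>"]
      rho_interior_add_scaled_mem[OF _ \<open>0 \<le> c\<close>, where p = "f \<omega>" and x = "- z \<omega>"] by simp_all
  then show ?case unfolding c_def by (intro exI[of _ "- c"] exI[of _ c]) (simp_all add: c_def add.commute)
next
  case (Suc n)
  let ?T = "LL (\<tau>i \<omega>)" and ?g = "(Q ^^ n) z (\<tau>i \<omega>)"
  have "\<tau>i \<omega> \<in> space M" by (rule tau_inv_mem[OF Suc.prems])
  obtain a b where ab: "?g - a *\<^sub>R f (\<tau>i \<omega>) \<in> C" "b *\<^sub>R f (\<tau>i \<omega>) - ?g \<in> C"
    "b - a \<le> \<eta> ^ n * (2 * supn M z / \<rho>)"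
    using Suc.IH[OF \<open>\<tau>i \<omega> \<in> space M\<close>] by blast
  have T: "?T \<in> operator_class C \<rho> \<theta>" by (rule LL_operator_class[OF \<open>\<tau>i \<omega> \<in> space M\<close>])
  obtain a' b' where ab': "(1 / lam \<omega>) *\<^sub>R ?T ?g - a' *\<^sub>R f \<omega> \<in> C"
    "b' *\<^sub>R f \<omega> - (1 / lam \<omega>) *\<^sub>R ?T ?g \<in> C" "b' - a' \<le> \<eta> * (b - a)"
    using order_interval_contraction[OF bounded_linear.linear[OF operator_classD(1)[OF T]]
        operator_classD(2)[OF T] rho_pos _ _ lam_pos[OF Suc.prems] LL_f_eq_scaleR[OF Suc.prems] ab(1,2)]
      normalized_partD(2,4) f_normalized \<open>\<tau>i \<omega> \<in> space M\<close> by blast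
  define m where "m = lf (?T ?g) / lam \<omega>"
  have Q_Suc: "(Q ^^ Suc n) z \<omega> = (1 / lam \<omega>) *\<^sub>R ?T ?g - m *\<^sub>R f \<omega>"
    using Suc.prems by (simp add: Q_inside fiber_map_def m_def scaleR_diff_right)
  have "\<eta> * (b - a) \<le> \<eta> * (\<eta> ^ n * (2 * supn M z / \<rho>))"
    by (rule mult_left_mono[OF ab(3) eta_const_nonneg])
  then have "(b' - m) - (a' - m) \<le> \<eta> * (\<eta> ^ n * (2 * supn M z / \<rho>))"
    using ab'(3) by linarith
  then show ?case unfolding Q_Suc using ab'(1,2)
    by (intro exI[of _ "a' - m"] exI[of _ "b' - m"]) (simp add: algebra_simps)
qed

lemma Q_power_norm_le:
  assumes z: "z \<in> Xsp M" and "\<omega> \<in> space M"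
  shows "norm ((Q ^^ n) z \<omega>) \<le> K / \<rho> * supn M z * \<eta> ^ n"
proof (cases n)
  case 0
  have "1 \<le> K / \<rho>" using K_ge_1 rho_le_1 rho_pos by (simp add: field_simps)
  then have "supn M z \<le> K / \<rho> * supn M z"
    using mult_right_mono[OF _ supn_nonneg[OF z space_ne]] by fastforce
  then show ?thesis using norm_le_supn[OF z \<open>\<omega> \<in> space M\<close>] 0 by simp
next
  case (Suc m)
  obtain a b where ab: "(Q ^^ n) z \<omega> - a *\<^sub>R f \<omega> \<in> C" "b *\<^sub>R f \<omega> - (Q ^^ n) z \<omega> \<in> C"
      "b - a \<le> \<eta> ^ n * (2 * supn M z / \<rho>)"
    using Q_power_order_interval[OF z \<open>\<omega> \<in> space M\<close>] by blast
  have "lf ((Q ^^ n) z \<omega>) = 0" unfolding Suc by (simp add: lf_Q[OF \<open>\<omega> \<in> space M\<close>])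
  then have "norm ((Q ^^ n) z \<omega>) \<le> K / 2 * (b - a)"
    using norm_le_order_interval[OF ab(1,2)] normalized_partD(3) f_normalized \<open>\<omega> \<in> space M\<close> by blast
  also have "\<dots> \<le> K / 2 * (\<eta> ^ n * (2 * supn M z / \<rho>))"
    using ab(3) K_ge_1 by (intro mult_left_mono) auto
  also have "\<dots> = K / \<rho> * supn M z * \<eta> ^ n" by (simp add: field_simps)
  finally show ?thesis .
qed

lemma norm_eta_less_1: "norm \<eta> < 1"
  using eta_const_nonneg eta_const_less_1 by simp

lemma summable_Q_power:
  assumes "z \<in> Xsp M" "\<omega> \<in> space M"
  shows "summable (\<lambda>n. (Q ^^ n) z \<omega>)"
  by (rule summable_comparison_test'[OF summable_mult[OF summable_geometric[OF norm_eta_less_1]]])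
    (rule Q_power_norm_le[OF assms])

lemma Q_power_tendsto_0:
  assumes "z \<in> Xsp M" "\<omega> \<in> space M"
  shows "(\<lambda>n. (Q ^^ n) z \<omega>) \<longlonglongrightarrow> 0"
proof (rule Lim_null_comparison)
  show "\<forall>\<^sub>F n in sequentially. norm ((Q ^^ n) z \<omega>) \<le> K / \<rho> * supn M z * \<eta> ^ n"
    using Q_power_norm_le[OF assms] by simp
  show "(\<lambda>n. K / \<rho> * supn M z * \<eta> ^ n) \<longlonglongrightarrow> 0"
    by (intro tendsto_mult_right_zero LIMSEQ_power_zero) (use norm_eta_less_1 in simp)
qed

lemma Q_power_tail_norm_le:
  assumes "z \<in> Xsp M" "\<omega> \<in> space M"
  shows "norm (\<Sum>n. (Q ^^ (n + N)) z \<omega>) \<le> K / \<rho> * supn M z * \<eta> ^ N / (1 - \<eta>)"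
proof -
  let ?c = "K / \<rho> * supn M z * \<eta> ^ N"
  have "norm (\<Sum>n. (Q ^^ (n + N)) z \<omega>) \<le> (\<Sum>n. ?c * \<eta> ^ n)"
    using Q_power_norm_le[OF assms, of "_ + N"]
    by (intro norm_suminf_le summable_mult summable_geometric[OF norm_eta_less_1])
      (simp add: power_add mult_ac)
  also have "\<dots> = ?c * (1 / (1 - \<eta>))"
    by (simp only: suminf_mult[OF summable_geometric[OF norm_eta_less_1]] suminf_geometric[OF norm_eta_less_1])
  finally show ?thesis by simp
qed

definition neumann :: "('w \<Rightarrow> 'e) \<Rightarrow> 'w \<Rightarrow> 'e" where
  "neumann z \<omega> = (if \<omega> \<in> space M then \<Sum>n. (Q ^^ n) z \<omega> else 0)"

lemma neumann_Xsp:
  assumes z: "z \<in> Xsp M"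
  shows "neumann z \<in> Xsp M"
proof -
  have "bochner_meas M (neumann z)"
  proof (rule bochner_meas_uniform_limit)
    show "bochner_meas M (\<lambda>\<omega>. \<Sum>n<N. (Q ^^ n) z \<omega>)" for N
      by (rule bochner_meas_sum) (rule Xsp_bochner_meas[OF Q_power_Xsp[OF z]])
    fix \<epsilon> :: real assume "\<epsilon> > 0"
    have "(\<lambda>N. K / \<rho> * supn M z * \<eta> ^ N / (1 - \<eta>)) \<longlonglongrightarrow> 0"
      by (intro tendsto_divide_zero tendsto_mult_right_zero LIMSEQ_power_zero) (use norm_eta_less_1 in simp)
    then have "\<forall>\<^sub>F N in sequentially. K / \<rho> * supn M z * \<eta> ^ N / (1 - \<eta>) < \<epsilon>"
      using \<open>\<epsilon> > 0\<close> by (rule order_tendstoD(2))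
    then obtain N where N: "K / \<rho> * supn M z * \<eta> ^ N / (1 - \<eta>) < \<epsilon>"
      unfolding eventually_sequentially by blast
    have "norm ((\<Sum>n<N. (Q ^^ n) z \<omega>) - neumann z \<omega>) < \<epsilon>" if "\<omega> \<in> space M" for \<omega>
    proof -
      have "neumann z \<omega> = (\<Sum>n. (Q ^^ (n + N)) z \<omega>) + (\<Sum>n<N. (Q ^^ n) z \<omega>)"
        unfolding neumann_def using that suminf_split_initial_segment[OF summable_Q_power[OF z that]]
        by simp
      then show ?thesis
        using Q_power_tail_norm_le[OF z that, of N] N by (simp add: norm_minus_commute)
    qed
    then show "\<exists>N. \<forall>\<omega>\<in>space M. norm ((\<Sum>n<N. (Q ^^ n) z \<omega>) - neumann z \<omega>) < \<epsilon>" by blast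
  qed
  then show ?thesis
  proof (rule XspI)
    fix \<omega> assume "\<omega> \<in> space M"
    then show "norm (neumann z \<omega>) \<le> K / \<rho> * supn M z * \<eta> ^ 0 / (1 - \<eta>)"
      using Q_power_tail_norm_le[OF z \<open>\<omega> \<in> space M\<close>, of 0] by (simp add: neumann_def)
  qed (simp add: neumann_def)
qed

lemma neumann_norm_le:
  assumes z: "z \<in> Xsp M"
  shows "supn M (neumann z) \<le> (1 + (K / \<rho>) / (1 - \<eta>)) * supn M z"
proof (rule supn_le[OF space_ne])
  fix \<omega> assume "\<omega> \<in> space M"
  define S where "S = supn M z"
  have "0 \<le> K / \<rho> * S"
    using K_ge_1 rho_pos supn_nonneg[OF z space_ne] unfolding S_def by simp
  have "neumann z \<omega> = z \<omega> + (\<Sum>n. (Q ^^ (n + 1)) z \<omega>)"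
    unfolding neumann_def using \<open>\<omega> \<in> space M\<close> suminf_split_initial_segment[OF summable_Q_power[OF z], of \<omega> 1]
    by simp
  then have "norm (neumann z \<omega>) \<le> norm (z \<omega>) + norm (\<Sum>n. (Q ^^ (n + 1)) z \<omega>)"
    by (simp add: norm_triangle_ineq)
  also have "\<dots> \<le> S + K / \<rho> * S * \<eta> ^ 1 / (1 - \<eta>)"
    using norm_le_supn[OF z \<open>\<omega> \<in> space M\<close>] Q_power_tail_norm_le[OF z \<open>\<omega> \<in> space M\<close>, of 1]
    unfolding S_def by (intro add_mono) auto
  also have "\<dots> \<le> S + K / \<rho> * S / (1 - \<eta>)"
    using mult_left_le[OF less_imp_le[OF eta_const_less_1] \<open>0 \<le> K / \<rho> * S\<close>] eta_const_less_1
    by (intro add_left_mono divide_right_mono) auto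
  also have "\<dots> = (1 + (K / \<rho>) / (1 - \<eta>)) * S" by (simp add: algebra_simps)
  finally show "norm (neumann z \<omega>) \<le> (1 + (K / \<rho>) / (1 - \<eta>)) * supn M z" unfolding S_def .
qed

lemma neumann_add:
  assumes "z \<in> Xsp M" "w \<in> Xsp M"
  shows "neumann (\<lambda>\<omega>. z \<omega> + w \<omega>) = (\<lambda>\<omega>. neumann z \<omega> + neumann w \<omega>)"
  unfolding neumann_def Q_power_add
  using suminf_add[OF summable_Q_power[OF assms(1)] summable_Q_power[OF assms(2)]] by auto

lemma neumann_scaleR:
  assumes "z \<in> Xsp M"
  shows "neumann (\<lambda>\<omega>. c *\<^sub>R z \<omega>) = (\<lambda>\<omega>. c *\<^sub>R neumann z \<omega>)"
  unfolding neumann_def Q_power_scaleR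
  using suminf_scaleR_right[OF summable_Q_power[OF assms]] by auto

text \<open>The sum telescopes because \<open>Q\<^sup>n z \<longrightarrow> 0\<close>.\<close>
lemma neumann_left_inverse:
  assumes z: "z \<in> Xsp M"
  shows "neumann (\<lambda>\<omega>. z \<omega> - Q z \<omega>) = z"
proof
  fix \<omega> show "neumann (\<lambda>\<omega>. z \<omega> - Q z \<omega>) \<omega> = z \<omega>"
  proof (cases "\<omega> \<in> space M")
    case True
    have "(\<lambda>n. (Q ^^ Suc n) z \<omega> - (Q ^^ n) z \<omega>) sums (0 - (Q ^^ 0) z \<omega>)"
      by (rule telescope_sums[OF Q_power_tendsto_0[OF z True]])
    then have "(\<lambda>n. (Q ^^ n) z \<omega> - (Q ^^ Suc n) z \<omega>) sums z \<omega>"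
      using sums_minus by fastforce
    moreover have "(Q ^^ n) (\<lambda>\<omega>. z \<omega> - Q z \<omega>) \<omega> = (Q ^^ n) z \<omega> - (Q ^^ Suc n) z \<omega>" for n
      unfolding Q_power_diff by (simp add: funpow_Suc_right del: funpow.simps)
    ultimately show ?thesis unfolding neumann_def using True by (simp add: sums_iff)
  qed (simp add: neumann_def Xsp_outside[OF z])
qed

lemma neumann_right_inverse:
  assumes z: "z \<in> Xsp M"
  shows "(\<lambda>\<omega>. neumann z \<omega> - Q (neumann z) \<omega>) = z"
proof
  fix \<omega> show "neumann z \<omega> - Q (neumann z) \<omega> = z \<omega>"
  proof (cases "\<omega> \<in> space M")
    case True
    then have "\<tau>i \<omega> \<in> space M" by (rule tau_inv_mem)
    have "Q (neumann z) \<omega> = fiber_map \<omega> (\<Sum>n. (Q ^^ n) z (\<tau>i \<omega>))"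
      using True \<open>\<tau>i \<omega> \<in> space M\<close> by (simp add: Q_inside neumann_def)
    also have "\<dots> = (\<Sum>n. fiber_map \<omega> ((Q ^^ n) z (\<tau>i \<omega>)))"
      by (rule bounded_linear.suminf[OF fiber_map_bounded_linear[OF True]
            summable_Q_power[OF z \<open>\<tau>i \<omega> \<in> space M\<close>]])
    also have "\<dots> = (\<Sum>n. (Q ^^ Suc n) z \<omega>)" using True by (simp add: Q_inside)
    also have "\<dots> = neumann z \<omega> - z \<omega>"
      unfolding neumann_def using True suminf_split_head[OF summable_Q_power[OF z True]] by simp
    finally show ?thesis by simp
  qed (simp add: neumann_def Q_outside Xsp_outside[OF z])
qed

lemma inverse_one_minus_Q:
  "\<exists>R. (\<forall>z\<in>Xsp M. R z \<in> Xsp M) \<and>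
       (\<forall>z\<in>Xsp M. \<forall>w\<in>Xsp M. R (\<lambda>\<omega>. z \<omega> + w \<omega>) = (\<lambda>\<omega>. R z \<omega> + R w \<omega>)) \<and>
       (\<forall>z\<in>Xsp M. \<forall>c. R (\<lambda>\<omega>. c *\<^sub>R z \<omega>) = (\<lambda>\<omega>. c *\<^sub>R R z \<omega>)) \<and>
       (\<forall>z\<in>Xsp M. R (\<lambda>\<omega>. z \<omega> - Q z \<omega>) = z) \<and>
       (\<forall>z\<in>Xsp M. (\<lambda>\<omega>. R z \<omega> - Q (R z) \<omega>) = z) \<and>
       (\<forall>z\<in>Xsp M. supn M (R z) \<le> (1 + (K / \<rho>) / (1 - \<eta>)) * supn M z)"
  using neumann_Xsp neumann_add neumann_scaleR neumann_left_inverse neumann_right_inverse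
    neumann_norm_le by blast

end

theorem lemma2p3:
  fixes \<rho> K \<theta> :: real
  assumes "0 < \<rho>" "\<rho> \<le> 1" "1 \<le> K" "1 \<le> \<theta>"
  shows
   "(\<exists>Cst>0. \<forall>(C :: 'e::banach set) lf \<M> (M :: 'w measure) \<tau> \<tau>i \<L>.
       full_setting C lf K \<rho> \<theta> \<M> M \<tau> \<tau>i \<L> \<longrightarrow>
       (\<forall>\<phi>\<in>Xsp M. \<forall>z\<in>Xsp M.
          (\<forall>\<omega>\<in>space M. \<phi> \<omega> \<in> normalized_part C \<rho> lf) \<and> supn M z < \<rho> / (2 * \<theta>\<^sup>2 * K) \<longrightarrow>
          supn M (\<lambda>\<omega>. piop M lf \<tau>i \<L> (\<lambda>\<omega>'. \<phi> \<omega>' + z \<omega>') \<omega> - piop M lf \<tau>i \<L> \<phi> \<omega>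
                         - Qop M lf \<tau>i \<L> \<phi> z \<omega>)
            \<le> Cst * (supn M z)\<^sup>2))
    \<and>
    (\<forall>(C :: 'e::banach set) lf \<M> (M :: 'w measure) \<tau> \<tau>i \<L>.
       full_setting C lf K \<rho> \<theta> \<M> M \<tau> \<tau>i \<L> \<longrightarrow>
       (\<forall>f\<in>Xsp M.
          (\<forall>\<omega>\<in>space M. f \<omega> \<in> normalized_part C \<rho> lf) \<and>
          (\<forall>\<omega>\<in>space M. piop M lf \<tau>i \<L> f \<omega> = f \<omega>) \<longrightarrow>
          (\<exists>R. (\<forall>z\<in>Xsp M. R z \<in> Xsp M) \<and>
               (\<forall>z\<in>Xsp M. \<forall>w\<in>Xsp M. R (\<lambda>\<omega>. z \<omega> + w \<omega>) = (\<lambda>\<omega>. R z \<omega> + R w \<omega>)) \<and>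
               (\<forall>z\<in>Xsp M. \<forall>c. R (\<lambda>\<omega>. c *\<^sub>R z \<omega>) = (\<lambda>\<omega>. c *\<^sub>R R z \<omega>)) \<and>
               (\<forall>z\<in>Xsp M. R (\<lambda>\<omega>. z \<omega> - Qop M lf \<tau>i \<L> f z \<omega>) = z) \<and>
               (\<forall>z\<in>Xsp M. (\<lambda>\<omega>. R z \<omega> - Qop M lf \<tau>i \<L> f (R z) \<omega>) = z) \<and>
               (\<forall>z\<in>Xsp M. supn M (R z) \<le> (1 + (K / \<rho>) / (1 - eta_const C \<rho>)) * supn M z))))"
  apply (intro conjI exI[of _ "2 * (K + 1) * K\<^sup>2 * \<theta> ^ 4 / \<rho>\<^sup>2"] allI impI ballI)
  subgoal using assms by simp
  subgoal by (elim conjE) (rule random_hyps.piop_remainder_le[OF random_hyps.intro])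
  subgoal by (elim conjE) (rule fixed_point_hyps.inverse_one_minus_Q[OF fixed_point_hyps.intro[OF
        random_hyps.intro fixed_point_hyps_axioms.intro]])
  done

end
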